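(* Let $1\le\nu<\infty$, let $\phi(z)=az+b$ with $0<|a|<1$, $b\in\mathbb{C}$, and let $w(z)=e^{p+qz+rz^2}$ with $p,q,r\in\mathbb{C}$ and $0<|r|\le(1-|a|^2)/2$, and assume $W_{w,\phi}$ is bounded on $\mathcal{F}^\nu$. Then: if $\operatorname{Re}p+\operatorname{Re}\left(\frac{qb}{1-a}\right)+\operatorname{Re}\left(\frac{rb^2}{(1-a)^2}\right)>0$, the operator $W_{w,\phi}$ is not power-bounded on $\mathcal{F}^\nu$; if $\operatorname{Re}p+\operatorname{Re}\left(\frac{qb}{1-a}\right)+\operatorname{Re}\left(\frac{rb^2}{(1-a)^2}\right)-\ln|a|<0$, the operator $W_{w,\phi}$ is power-bounded on $\mathcal{F}^\nu$.
   Context: For $1\le\nu<\infty$, $\mathcal{F}^\nu$ is the space of entire functions $f$ with $\|f\|_\nu:=\left(\frac{\nu}{2\pi}\int_{\mathbb{C}}|f(z)|^\nu e^{-\nu|z|^2/2}\,dm(z)\right)^{1/\nu}<\infty$. $W_{w,\phi}f=w\,(f\circ\phi)$. An operator $T$ is power-bounded if $\sup_{n\ge1}\|T^n\|<\infty$. *)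

theory Defs
  imports "HOL-Analysis.Analysis"
begin

definition fock_integral :: "real \<Rightarrow> (complex \<Rightarrow> complex) \<Rightarrow> ennreal" where
  "fock_integral \<nu> f =
     (\<integral>\<^sup>+ z. ennreal (norm (f z) powr \<nu> * exp (- \<nu> * (norm z)\<^sup>2 / 2)) \<partial>lborel)"

definition fock_space :: "real \<Rightarrow> (complex \<Rightarrow> complex) set" where
  "fock_space \<nu> = {f. f holomorphic_on UNIV \<and> fock_integral \<nu> f < \<infinity>}"

definition fock_norm :: "real \<Rightarrow> (complex \<Rightarrow> complex) \<Rightarrow> real" where
  "fock_norm \<nu> f = (\<nu> / (2 * pi) * enn2real (fock_integral \<nu> f)) powr (1 / \<nu>)"

definition wcomp :: "(complex \<Rightarrow> complex) \<Rightarrow> (complex \<Rightarrow> complex)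
                    \<Rightarrow> (complex \<Rightarrow> complex) \<Rightarrow> (complex \<Rightarrow> complex)" where
  "wcomp w \<phi> f = (\<lambda>z. w z * f (\<phi> z))"

definition bounded_on_fock :: "real \<Rightarrow> ((complex \<Rightarrow> complex) \<Rightarrow> (complex \<Rightarrow> complex)) \<Rightarrow> bool" where
  "bounded_on_fock \<nu> T \<longleftrightarrow>
     (\<forall>f\<in>fock_space \<nu>. T f \<in> fock_space \<nu>) \<and>
     (\<exists>C. \<forall>f\<in>fock_space \<nu>. fock_norm \<nu> (T f) \<le> C * fock_norm \<nu> f)"

definition power_bounded_on_fock :: "real \<Rightarrow> ((complex \<Rightarrow> complex) \<Rightarrow> (complex \<Rightarrow> complex)) \<Rightarrow> bool" where
  "power_bounded_on_fock \<nu> T \<longleftrightarrow>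
     (\<exists>C. \<forall>n\<ge>1. \<forall>f\<in>fock_space \<nu>. fock_norm \<nu> ((T ^^ n) f) \<le> C * fock_norm \<nu> f)"

end

theory Submission
  imports Defs "HOL-Probability.Distributions" "HOL-Complex_Analysis.Complex_Analysis"
begin

text \<open>
  Let z0 = b / (1 - a) be the fixed point of \<phi> and u = z - z0. Completing squares gives
  |w z| exp ((|\<phi> z|^2 - |z|^2) / 2) = exp (c + E u), where c is the real number of the statement,
  E u = Re (l u) - H u, and H u = (1 - |a|^2) / 2 |u|^2 - Re (r u^2) is a quadratic form which is
  nonnegative because |r| \<le> (1 - |a|^2) / 2 (below, E = log_gain a r l and H = quad_form a r). Consequently the Fock density of W^n f at z is
  exp (\<nu> (n c + \<Sum>k<n. E (a^k u))) times the Fock density of f at \<phi>^n z.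

  If c > 0, the orbit sums are bounded below near z0, so the norm of W^n 1 grows like exp (n c).

  Conversely, testing the boundedness of W on the kernels exp (cnj \<xi> z) shows E \<le> M. Then
  |Re (l u)| \<le> 2 sqrt (M H u), which bounds the orbit sums from above and yields the Gaussian
  decay E u \<le> 2 M - |r| (Im (\<sigma> u))^2 for a unimodular \<sigma>. An entire g satisfies
  |g 0|^\<nu> \<le> K \<integral> |g|^\<nu> over [-2,2]^2 (Cauchy's formula on squares); by Fubini, the \<nu>-th power of
  the norm of W^n f is therefore at most that of f times exp (\<nu> n c) times the integral of
  exp (- \<nu> |r| (Im (\<sigma> u))^2) over a square of side O(|a|^-n), which is O(|a|^-n).
  Finally \<nu> \<ge> 1 and c < ln |a| < 0 give exp (\<nu> c) < |a|.
\<close>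

abbreviation fock_density :: "real \<Rightarrow> (complex \<Rightarrow> complex) \<Rightarrow> complex \<Rightarrow> real" where
  "fock_density \<nu> f z \<equiv> norm (f z) powr \<nu> * exp (- \<nu> * (norm z)\<^sup>2 / 2)"

abbreviation centred_square :: "real \<Rightarrow> complex set" where
  "centred_square s \<equiv> cbox (Complex (-s) (-s)) (Complex s s)"

section \<open>Lebesgue measure on the complex plane\<close>

lemma borel_measurable_Complex[measurable (raw)]:
  fixes f h :: "'a \<Rightarrow> real"
  assumes [measurable]: "f \<in> borel_measurable M" "h \<in> borel_measurable M"
  shows "(\<lambda>x. Complex (f x) (h x)) \<in> borel_measurable M"
proof -
  have "(\<lambda>x. complex_of_real (f x) + \<i> * complex_of_real (h x)) \<in> borel_measurable M"
    by measurable
  then show ?thesis by (simp add: Complex_eq)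
qed

lemma borel_measurable_case_prod_Complex[measurable]:
  "(\<lambda>(x,y). Complex x y) \<in> borel_measurable (lborel \<Otimes>\<^sub>M lborel)"
proof -
  have "continuous_on UNIV (\<lambda>p::real\<times>real. complex_of_real (fst p) + \<i> * complex_of_real (snd p))"
    by (intro continuous_intros)
  then have "(\<lambda>p::real\<times>real. complex_of_real (fst p) + \<i> * complex_of_real (snd p)) \<in> borel_measurable borel"
    by (rule borel_measurable_continuous_onI)
  moreover have "sets (lborel \<Otimes>\<^sub>M lborel) = sets (borel :: (real\<times>real) measure)"
    by (subst borel_prod[symmetric]) (rule sets_pair_measure_cong; simp)
  ultimately show ?thesis
    by (simp add: case_prod_beta' Complex_eq cong: measurable_cong_sets)
qed

lemma distr_lborel_pair_Complex:
  "distr (lborel \<Otimes>\<^sub>M lborel) borel (\<lambda>(x,y). Complex x y) = (lborel :: complex measure)"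
proof (rule lborel_eqI[symmetric])
  fix l u :: complex
  assume le: "\<And>b. b \<in> Basis \<Longrightarrow> l \<bullet> b \<le> u \<bullet> b"
  have le1: "Re l \<le> Re u" "Im l \<le> Im u" using le[of 1] le[of \<i>] by (auto simp: Basis_complex_def)
  have eq: "(\<lambda>(x,y). Complex x y) -` box l u \<inter> space (lborel \<Otimes>\<^sub>M lborel) = {Re l<..<Re u} \<times> {Im l<..<Im u}"
    by (auto simp: in_box_complex_iff space_pair_measure)
  show "emeasure (distr (lborel \<Otimes>\<^sub>M lborel) borel (\<lambda>(x,y). Complex x y)) (box l u) = (\<Prod>b\<in>Basis. (u - l) \<bullet> b)"
    using le1
    by (simp add: emeasure_distr eq lborel.emeasure_pair_measure_Times Basis_complex_def ennreal_mult)
qed simp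

lemma nn_integral_lborel_complex:
  fixes f :: "complex \<Rightarrow> ennreal"
  assumes [measurable]: "f \<in> borel_measurable borel"
  shows "(\<integral>\<^sup>+z. f z \<partial>lborel) = (\<integral>\<^sup>+x. \<integral>\<^sup>+y. f (Complex x y) \<partial>lborel \<partial>lborel)"
proof -
  have "(\<integral>\<^sup>+z. f z \<partial>lborel) = (\<integral>\<^sup>+z. f z \<partial>distr (lborel \<Otimes>\<^sub>M lborel) borel (\<lambda>(x,y). Complex x y))"
    by (simp add: distr_lborel_pair_Complex)
  also have "\<dots> = (\<integral>\<^sup>+p. f (case p of (x,y) \<Rightarrow> Complex x y) \<partial>(lborel \<Otimes>\<^sub>M lborel))"
    by (rule nn_integral_distr) auto
  also have "\<dots> = (\<integral>\<^sup>+x. \<integral>\<^sup>+y. f (Complex x y) \<partial>lborel \<partial>lborel)"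
    by (subst lborel.nn_integral_fst[symmetric]) (auto simp: case_prod_beta')
  finally show ?thesis .
qed

lemma nn_integral_lborel_translate:
  fixes f :: "'a::euclidean_space \<Rightarrow> ennreal"
  assumes [measurable]: "f \<in> borel_measurable borel"
  shows "(\<integral>\<^sup>+z. f (z + c) \<partial>lborel) = (\<integral>\<^sup>+z. f z \<partial>lborel)"
proof -
  have "(\<integral>\<^sup>+z. f z \<partial>lborel) = (\<integral>\<^sup>+z. f z \<partial>distr lborel borel ((+) c))"
    by (simp add: lborel_distr_plus)
  also have "\<dots> = (\<integral>\<^sup>+z. f (c + z) \<partial>lborel)"
    by (rule nn_integral_distr) auto
  finally show ?thesis by (simp add: add.commute)
qed

lemma integrable_gaussian:
  fixes k :: real
  assumes "k > 0"
  shows "integrable lborel (\<lambda>t. exp (- k * t\<^sup>2))"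
proof -
  define \<sigma> where "\<sigma> = 1 / sqrt (2 * k)"
  have "\<sigma> > 0" using assms by (simp add: \<sigma>_def)
  have "(\<lambda>t. exp (- k * t\<^sup>2)) = (\<lambda>t. sqrt (2 * pi * \<sigma>\<^sup>2) * normal_density 0 \<sigma> t)"
    using assms by (simp add: fun_eq_iff normal_density_def \<sigma>_def power_divide)
  then show ?thesis
    using \<open>\<sigma> > 0\<close> by (simp only:) (intro integrable_mult_right integrable_normal_density)
qed

lemma nn_integral_gaussian_finite:
  fixes k :: real
  assumes "k > 0"
  shows "(\<integral>\<^sup>+t. ennreal (exp (- k * t\<^sup>2)) \<partial>lborel) < \<infinity>"
  using integrable_gaussian[OF assms] by (simp add: integrable_iff_bounded)

lemma nn_integral_complex_gaussian_finite:
  assumes "k > 0"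
  shows "(\<integral>\<^sup>+z. ennreal (exp (- k * (norm (z::complex))\<^sup>2)) \<partial>lborel) < \<infinity>"
proof -
  have "(\<integral>\<^sup>+z. ennreal (exp (- k * (norm (z::complex))\<^sup>2)) \<partial>lborel)
     = (\<integral>\<^sup>+x. \<integral>\<^sup>+y. ennreal (exp (- k * x\<^sup>2)) * ennreal (exp (- k * y\<^sup>2)) \<partial>lborel \<partial>lborel)"
    by (subst nn_integral_lborel_complex)
       (auto simp: cmod_power2 ennreal_mult[symmetric] exp_add[symmetric] algebra_simps intro!: nn_integral_cong)
  also have "\<dots> = (\<integral>\<^sup>+x. ennreal (exp (- k * x\<^sup>2)) * (\<integral>\<^sup>+y. ennreal (exp (- k * y\<^sup>2)) \<partial>lborel) \<partial>lborel)"
    by (subst nn_integral_cmult) auto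
  also have "\<dots> = (\<integral>\<^sup>+y. ennreal (exp (- k * y\<^sup>2)) \<partial>lborel) * (\<integral>\<^sup>+x. ennreal (exp (- k * x\<^sup>2)) \<partial>lborel)"
    by (subst nn_integral_multc) auto
  finally show ?thesis using nn_integral_gaussian_finite[OF assms] by (simp add: ennreal_mult_less_top)
qed

lemma nn_integral_segment:
  fixes F :: "real \<Rightarrow> ennreal"
  assumes [measurable]: "F \<in> borel_measurable borel" and "\<alpha> \<noteq> \<beta>"
  shows "(\<integral>\<^sup>+t. F (\<alpha> + t * (\<beta> - \<alpha>)) * indicator {0..1} t \<partial>lborel)
       = ennreal (1 / \<bar>\<beta> - \<alpha>\<bar>) * (\<integral>\<^sup>+x. F x * indicator {min \<alpha> \<beta>..max \<alpha> \<beta>} x \<partial>lborel)"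
proof -
  have c: "\<beta> - \<alpha> \<noteq> 0" using assms by simp
  have mem: "\<alpha> + (\<beta> - \<alpha>) * t \<in> {min \<alpha> \<beta>..max \<alpha> \<beta>} \<longleftrightarrow> t \<in> {0..1}" for t
  proof (cases "\<alpha> < \<beta>")
    case True
    have "\<alpha> + (\<beta> - \<alpha>) * t \<in> {min \<alpha> \<beta>..max \<alpha> \<beta>} \<longleftrightarrow> 0 \<le> (\<beta> - \<alpha>) * t \<and> (\<beta> - \<alpha>) * t \<le> (\<beta> - \<alpha>) * 1"
      using True by (auto simp: algebra_simps)
    also have "\<dots> \<longleftrightarrow> t \<in> {0..1}" using True by (simp add: zero_le_mult_iff mult_le_cancel_left)
    finally show ?thesis .
  next
    case False
    then have "\<beta> < \<alpha>" using assms by simp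
    have "\<alpha> + (\<beta> - \<alpha>) * t \<in> {min \<alpha> \<beta>..max \<alpha> \<beta>} \<longleftrightarrow> 0 \<le> (\<alpha> - \<beta>) * t \<and> (\<alpha> - \<beta>) * t \<le> (\<alpha> - \<beta>) * 1"
      using \<open>\<beta> < \<alpha>\<close> by (auto simp: algebra_simps)
    also have "\<dots> \<longleftrightarrow> t \<in> {0..1}" using \<open>\<beta> < \<alpha>\<close> by (simp add: zero_le_mult_iff mult_le_cancel_left)
    finally show ?thesis .
  qed
  have ind: "indicator {min \<alpha> \<beta>..max \<alpha> \<beta>} (\<alpha> + t * (\<beta> - \<alpha>)) = (indicator {0..1} t :: ennreal)" for t
    using mem[of t] by (simp add: indicator_def mult.commute)
  have "(\<integral>\<^sup>+x. F x * indicator {min \<alpha> \<beta>..max \<alpha> \<beta>} x \<partial>lborel)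
      = ennreal \<bar>\<beta> - \<alpha>\<bar> * (\<integral>\<^sup>+t. F (\<alpha> + (\<beta> - \<alpha>) * t) * indicator {min \<alpha> \<beta>..max \<alpha> \<beta>} (\<alpha> + (\<beta> - \<alpha>) * t) \<partial>lborel)"
    by (rule nn_integral_real_affine[OF _ c]) simp
  also have "\<dots> = ennreal \<bar>\<beta> - \<alpha>\<bar> * (\<integral>\<^sup>+t. F (\<alpha> + t * (\<beta> - \<alpha>)) * indicator {0..1} t \<partial>lborel)"
    by (simp only: mult.commute[of "\<beta> - \<alpha>"] ind)
  finally show ?thesis
    using c by (simp add: ennreal_mult[symmetric] mult.assoc[symmetric] divide_ennreal ennreal_1[symmetric]
        del: ennreal_1) (simp add: ennreal_mult'[symmetric])
qed

lemma nn_integral_segment_le_half: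
  fixes F :: "real \<Rightarrow> ennreal"
  assumes [measurable]: "F \<in> borel_measurable borel"
    and "2 \<le> \<bar>\<beta> - \<alpha>\<bar>" "\<alpha> \<in> {-2..2}" "\<beta> \<in> {-2..2}"
  shows "(\<integral>\<^sup>+t. F (\<alpha> + t * (\<beta> - \<alpha>)) * indicator {0..1} t \<partial>lborel)
     \<le> ennreal (1/2) * (\<integral>\<^sup>+x. F x * indicator {-2..2} x \<partial>lborel)"
proof -
  have "(\<integral>\<^sup>+t. F (\<alpha> + t * (\<beta> - \<alpha>)) * indicator {0..1} t \<partial>lborel)
     = ennreal (1 / \<bar>\<beta> - \<alpha>\<bar>) * (\<integral>\<^sup>+x. F x * indicator {min \<alpha> \<beta>..max \<alpha> \<beta>} x \<partial>lborel)"
    using assms by (intro nn_integral_segment) auto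
  also have "\<dots> \<le> ennreal (1/2) * (\<integral>\<^sup>+x. F x * indicator {-2..2} x \<partial>lborel)"
  proof (rule mult_mono[OF _ nn_integral_mono])
    show "ennreal (1 / \<bar>\<beta> - \<alpha>\<bar>) \<le> ennreal (1 / 2)"
      using assms by (intro ennreal_leI) (auto simp: field_simps)
    fix x :: real
    show "F x * indicator {min \<alpha> \<beta>..max \<alpha> \<beta>} x \<le> F x * indicator {-2..2} x"
      using assms by (intro mult_left_mono) (auto simp: indicator_def)
  qed auto
  finally show ?thesis .
qed

lemma nn_integral_reflect_split:
  fixes F :: "real \<Rightarrow> ennreal"
  assumes [measurable]: "F \<in> borel_measurable borel"
  shows "(\<integral>\<^sup>+s. (F (-s) + F s) * indicator {1..2} s \<partial>lborel) \<le> (\<integral>\<^sup>+y. F y * indicator {-2..2} y \<partial>lborel)"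
proof -
  have "(\<integral>\<^sup>+y. F y * indicator {-2..-1} y \<partial>lborel)
      = ennreal \<bar>-1\<bar> * (\<integral>\<^sup>+s. F (0 + -1 * s) * indicator {-2..-1} (0 + -1 * s) \<partial>lborel)"
    by (rule nn_integral_real_affine) auto
  also have "\<dots> = (\<integral>\<^sup>+s. F (-s) * indicator {1..2} s \<partial>lborel)"
    by (auto intro!: nn_integral_cong simp: indicator_def)
  finally have reflect: "(\<integral>\<^sup>+s. F (-s) * indicator {1..2} s \<partial>lborel) = (\<integral>\<^sup>+y. F y * indicator {-2..-1} y \<partial>lborel)" ..
  have "(\<integral>\<^sup>+s. (F (-s) + F s) * indicator {1..2} s \<partial>lborel)
      = (\<integral>\<^sup>+s. F (-s) * indicator {1..2} s \<partial>lborel) + (\<integral>\<^sup>+s. F s * indicator {1..2} s \<partial>lborel)"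
    by (subst nn_integral_add[symmetric]) (auto simp: distrib_right)
  also have "\<dots> = (\<integral>\<^sup>+y. F y * indicator {-2..-1} y + F y * indicator {1..2} y \<partial>lborel)"
    unfolding reflect by (rule nn_integral_add[symmetric]) auto
  also have "\<dots> \<le> (\<integral>\<^sup>+y. F y * indicator {-2..2} y \<partial>lborel)"
    by (intro nn_integral_mono) (auto simp: indicator_def)
  finally show ?thesis .
qed

lemma nn_integral_centred_square:
  fixes G :: "complex \<Rightarrow> ennreal"
  assumes [measurable]: "G \<in> borel_measurable borel"
  shows "(\<integral>\<^sup>+y. (\<integral>\<^sup>+x. G (Complex x y) * indicator {-2..2} x \<partial>lborel) * indicator {-2..2} y \<partial>lborel)
           = (\<integral>\<^sup>+z. G z * indicator (centred_square 2) z \<partial>lborel)"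
    and "(\<integral>\<^sup>+x. (\<integral>\<^sup>+y. G (Complex x y) * indicator {-2..2} y \<partial>lborel) * indicator {-2..2} x \<partial>lborel)
           = (\<integral>\<^sup>+z. G z * indicator (centred_square 2) z \<partial>lborel)"
proof -
  have square: "(\<integral>\<^sup>+z. G z * indicator (centred_square 2) z \<partial>lborel)
      = (\<integral>\<^sup>+x. \<integral>\<^sup>+y. G (Complex x y) * indicator {-2..2} x * indicator {-2..2} y \<partial>lborel \<partial>lborel)"
    by (subst nn_integral_lborel_complex) (auto simp: in_cbox_complex_iff indicator_def intro!: nn_integral_cong)
  show "(\<integral>\<^sup>+x. (\<integral>\<^sup>+y. G (Complex x y) * indicator {-2..2} y \<partial>lborel) * indicator {-2..2} x \<partial>lborel)
           = (\<integral>\<^sup>+z. G z * indicator (centred_square 2) z \<partial>lborel)"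
    by (subst nn_integral_lborel_complex)
       (auto simp: in_cbox_complex_iff indicator_def nn_integral_multc[symmetric] intro!: nn_integral_cong)
  have "(\<integral>\<^sup>+y. (\<integral>\<^sup>+x. G (Complex x y) * indicator {-2..2} x \<partial>lborel) * indicator {-2..2} y \<partial>lborel)
      = (\<integral>\<^sup>+y. \<integral>\<^sup>+x. G (Complex x y) * indicator {-2..2} x * indicator {-2..2} y \<partial>lborel \<partial>lborel)"
    by (simp add: nn_integral_multc)
  also have "\<dots> = (\<integral>\<^sup>+x. \<integral>\<^sup>+y. G (Complex x y) * indicator {-2..2} x * indicator {-2..2} y \<partial>lborel \<partial>lborel)"
    by (rule lborel_pair.Fubini') measurable
  finally show "(\<integral>\<^sup>+y. (\<integral>\<^sup>+x. G (Complex x y) * indicator {-2..2} x \<partial>lborel) * indicator {-2..2} y \<partial>lborel)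
           = (\<integral>\<^sup>+z. G z * indicator (centred_square 2) z \<partial>lborel)"
    unfolding square .
qed

lemma nn_integral_kernel_le:
  fixes E F :: "complex \<Rightarrow> ennreal" and P :: "complex \<Rightarrow> complex"
  assumes [measurable]: "E \<in> borel_measurable borel" "F \<in> borel_measurable borel"
    "P \<in> borel_measurable borel" "S \<in> sets borel"
    and bound: "\<And>\<xi>. (\<integral>\<^sup>+z. E z * indicator S (\<xi> - P z) \<partial>lborel) \<le> B"
  shows "(\<integral>\<^sup>+z. E z * (\<integral>\<^sup>+\<xi>. F \<xi> * indicator S (\<xi> - P z) \<partial>lborel) \<partial>lborel)
       \<le> B * (\<integral>\<^sup>+\<xi>. F \<xi> \<partial>lborel)"
proof -
  have "(\<integral>\<^sup>+z. E z * (\<integral>\<^sup>+\<xi>. F \<xi> * indicator S (\<xi> - P z) \<partial>lborel) \<partial>lborel)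
      = (\<integral>\<^sup>+z. \<integral>\<^sup>+\<xi>. F \<xi> * (E z * indicator S (\<xi> - P z)) \<partial>lborel \<partial>lborel)"
    by (intro nn_integral_cong) (simp add: nn_integral_cmult[symmetric] mult_ac)
  also have "\<dots> = (\<integral>\<^sup>+\<xi>. \<integral>\<^sup>+z. F \<xi> * (E z * indicator S (\<xi> - P z)) \<partial>lborel \<partial>lborel)"
    by (rule lborel_pair.Fubini'[symmetric]) measurable
  also have "\<dots> = (\<integral>\<^sup>+\<xi>. F \<xi> * (\<integral>\<^sup>+z. E z * indicator S (\<xi> - P z) \<partial>lborel) \<partial>lborel)"
    by (intro nn_integral_cong) (simp add: nn_integral_cmult)
  also have "\<dots> \<le> (\<integral>\<^sup>+\<xi>. F \<xi> * B \<partial>lborel)"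
    by (intro nn_integral_mono mult_left_mono bound) simp
  also have "\<dots> = B * (\<integral>\<^sup>+\<xi>. F \<xi> \<partial>lborel)"
    by (simp only: mult.commute[of _ B]) (rule nn_integral_cmult, measurable)
  finally show ?thesis .
qed

section \<open>A local mean value estimate for entire functions\<close>

lemma norm_contour_integral_div_linepath_le:
  fixes g :: "complex \<Rightarrow> complex"
  assumes g: "g holomorphic_on UNIV" and s: "s > 0" and AB: "norm (B - A) = 2 * s"
    and far: "\<And>t. t \<in> {0..1} \<Longrightarrow> s \<le> norm (linepath A B t)"
  shows "(\<lambda>w. g w / w) contour_integrable_on linepath A B"
    "norm (contour_integral (linepath A B) (\<lambda>w. g w / w)) \<le> 2 * integral {0..1} (\<lambda>t. norm (g (linepath A B t)))"
proof -
  have nz: "0 \<notin> path_image (linepath A B)"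
    using far s by (force simp: path_image_def)
  have contg: "continuous_on UNIV g" using g holomorphic_on_imp_continuous_on by blast
  have cf: "continuous_on (path_image (linepath A B)) (\<lambda>w. g w / w)"
    using nz by (intro continuous_intros continuous_on_subset[OF contg]) auto
  then show "(\<lambda>w. g w / w) contour_integrable_on linepath A B"
    by (intro contour_integrable_continuous_linepath) simp
  have cl: "continuous_on {0..1} (linepath A B)" by (simp add: continuous_on_linepath)
  have c1: "continuous_on {0..1} (\<lambda>t. g (linepath A B t) / linepath A B t * (B - A))"
  proof -
    have "continuous_on {0..1} ((\<lambda>w. g w / w) \<circ> linepath A B)"
      by (rule continuous_on_compose[OF cl]) (metis cf path_image_def)
    then have "continuous_on {0..1} (\<lambda>t. g (linepath A B t) / linepath A B t)" by (simp add: o_def)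
    then show ?thesis using continuous_on_mult[OF _ continuous_on_const] by blast
  qed
  have c2: "continuous_on {0..1} (\<lambda>t. 2 * norm (g (linepath A B t)))"
    by (intro continuous_intros continuous_on_compose2[OF contg cl]) auto
  have "norm (integral {0..1} (\<lambda>t. g (linepath A B t) / linepath A B t * (B - A)))
      \<le> integral {0..1} (\<lambda>t. 2 * norm (g (linepath A B t)))"
  proof (rule integral_norm_bound_integral)
    show "(\<lambda>t. g (linepath A B t) / linepath A B t * (B - A)) integrable_on {0..1}"
      using c1 integrable_continuous_interval by blast
    show "(\<lambda>t. 2 * norm (g (linepath A B t))) integrable_on {0..1}"
      using c2 integrable_continuous_interval by blast
    fix t :: real assume t: "t \<in> {0..1}"
    have st: "s \<le> norm (linepath A B t)" using far t by blast
    have "norm (g (linepath A B t) / linepath A B t * (B - A)) = norm (g (linepath A B t)) * (2 * s) / norm (linepath A B t)"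
      by (simp add: norm_divide norm_mult AB)
    also have "\<dots> \<le> norm (g (linepath A B t)) * (2 * s) / s"
      using st s by (intro divide_left_mono) (auto intro!: mult_pos_pos)
    finally show "norm (g (linepath A B t) / linepath A B t * (B - A)) \<le> 2 * norm (g (linepath A B t))"
      using s by simp
  qed
  then show "norm (contour_integral (linepath A B) (\<lambda>w. g w / w)) \<le> 2 * integral {0..1} (\<lambda>t. norm (g (linepath A B t)))"
    by (simp add: contour_integral_integral)
qed

lemma has_contour_integral_rectpath_div:
  fixes g :: "complex \<Rightarrow> complex"
  assumes g: "g holomorphic_on UNIV" and box: "0 \<in> box a b"
  shows "((\<lambda>w. g w / w) has_contour_integral (complex_of_real (2 * pi) * \<i> * g 0)) (rectpath a b)"
proof -
  have "((\<lambda>w. g w / (w - 0)) has_contour_integral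
          (complex_of_real (2 * pi) * \<i> * winding_number (rectpath a b) 0 * g 0)) (rectpath a b)"
  proof (rule Cauchy_integral_formula_convex_simple[where S = UNIV])
    show "path_image (rectpath a b) \<subseteq> UNIV - {0}"
      using box path_image_rectpath_cbox_minus_box[of a b] by (auto simp: in_box_complex_iff)
  qed (use g in auto)
  then show ?thesis using winding_number_rectpath[OF box] by simp
qed

lemma pi_norm_le_square_side_integrals:
  fixes g :: "complex \<Rightarrow> complex"
  assumes g: "g holomorphic_on UNIV" and s: "s > 0"
  shows "pi * norm (g 0) \<le>
     integral {0..1} (\<lambda>t. norm (g (linepath (Complex (-s) (-s)) (Complex s (-s)) t))) +
     integral {0..1} (\<lambda>t. norm (g (linepath (Complex s (-s)) (Complex s s) t))) +
     integral {0..1} (\<lambda>t. norm (g (linepath (Complex s s) (Complex (-s) s) t))) +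
     integral {0..1} (\<lambda>t. norm (g (linepath (Complex (-s) s) (Complex (-s) (-s)) t)))"
proof -
  define a1 a2 a3 a4 where "a1 = Complex (-s) (-s)" and "a2 = Complex s (-s)"
    and "a3 = Complex s s" and "a4 = Complex (-s) s"
  define f where "f = (\<lambda>w. g w / w)"
  have lp: "linepath a b t = Complex ((1 - t) * Re a + t * Re b) ((1 - t) * Im a + t * Im b)" for a b t
    by (simp add: linepath_def complex_eq_iff)
  have far1: "s \<le> norm (linepath a1 a2 t)" for t
    using abs_Im_le_cmod[of "linepath a1 a2 t"] s by (simp add: lp a1_def a2_def algebra_simps)
  have far2: "s \<le> norm (linepath a2 a3 t)" for t
    using abs_Re_le_cmod[of "linepath a2 a3 t"] s by (simp add: lp a2_def a3_def algebra_simps)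
  have far3: "s \<le> norm (linepath a3 a4 t)" for t
    using abs_Im_le_cmod[of "linepath a3 a4 t"] s by (simp add: lp a3_def a4_def algebra_simps)
  have far4: "s \<le> norm (linepath a4 a1 t)" for t
    using abs_Re_le_cmod[of "linepath a4 a1 t"] s by (simp add: lp a4_def a1_def algebra_simps)
  have n12: "norm (a2 - a1) = 2 * s" and n23: "norm (a3 - a2) = 2 * s"
    and n34: "norm (a4 - a3) = 2 * s" and n41: "norm (a1 - a4) = 2 * s"
    using s by (simp_all add: a1_def a2_def a3_def a4_def cmod_def real_sqrt_mult power_mult_distrib[symmetric])
  note S1 = norm_contour_integral_div_linepath_le[OF g s n12 far1]
    and S2 = norm_contour_integral_div_linepath_le[OF g s n23 far2]
    and S3 = norm_contour_integral_div_linepath_le[OF g s n34 far3]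
    and S4 = norm_contour_integral_div_linepath_le[OF g s n41 far4]
  have box0: "0 \<in> box a1 a3" using s by (simp add: a1_def a3_def in_box_complex_iff)
  have C1: "(f has_contour_integral (complex_of_real (2 * pi) * \<i> * g 0)) (rectpath a1 a3)"
    unfolding f_def by (rule has_contour_integral_rectpath_div[OF g box0])
  have C2: "(f has_contour_integral (contour_integral (linepath a1 a2) f + (contour_integral (linepath a2 a3) f
      + (contour_integral (linepath a3 a4) f + contour_integral (linepath a4 a1) f)))) (rectpath a1 a3)"
    unfolding rectpath_def Let_def f_def
    using S1(1) S2(1) S3(1) S4(1)
    by (simp add: a1_def a2_def a3_def a4_def has_contour_integral_integral has_contour_integral_join)
  have eq: "complex_of_real (2 * pi) * \<i> * g 0 = contour_integral (linepath a1 a2) f + (contour_integral (linepath a2 a3) f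
      + (contour_integral (linepath a3 a4) f + contour_integral (linepath a4 a1) f))"
    using has_contour_integral_unique[OF C1 C2] .
  have "2 * pi * norm (g 0) = norm (complex_of_real (2 * pi) * \<i> * g 0)" by (simp add: norm_mult)
  also have "\<dots> \<le> norm (contour_integral (linepath a1 a2) f) + (norm (contour_integral (linepath a2 a3) f)
      + (norm (contour_integral (linepath a3 a4) f) + norm (contour_integral (linepath a4 a1) f)))"
    unfolding eq by (intro order.trans[OF norm_triangle_ineq] add_mono order.refl)
  finally show ?thesis
    using S1(2) S2(2) S3(2) S4(2) unfolding f_def a1_def a2_def a3_def a4_def by linarith
qed

lemma ennreal_integral_linepath:
  fixes G :: "complex \<Rightarrow> real"
  assumes G: "continuous_on UNIV G" "\<And>z. 0 \<le> G z"
  shows "ennreal (integral {0..1} (\<lambda>t. G (linepath A B t))) = (\<integral>\<^sup>+t. ennreal (G (linepath A B t)) * indicator {0..1} t \<partial>lborel)"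
proof -
  have "continuous_on {0..1} (\<lambda>t. G (linepath A B t))"
    by (intro continuous_on_compose2[OF G(1)] continuous_on_linepath) auto
  then have "((\<lambda>t. G (linepath A B t)) has_integral (integral {0..1} (\<lambda>t. G (linepath A B t)))) {0..1}"
    using integrable_continuous_interval by blast
  from nn_integral_has_integral_lebesgue'[OF _ this] G(2) show ?thesis by simp
qed

lemma integral_horizontal_segment_le:
  fixes G :: "complex \<Rightarrow> real"
  assumes G: "continuous_on UNIV G" "\<And>z. 0 \<le> G z"
    and seg: "2 \<le> \<bar>\<beta> - \<alpha>\<bar>" "\<alpha> \<in> {-2..2}" "\<beta> \<in> {-2..2}"
  shows "ennreal (integral {0..1} (\<lambda>t. G (linepath (Complex \<alpha> y) (Complex \<beta> y) t)))
     \<le> ennreal (1/2) * (\<integral>\<^sup>+x. ennreal (G (Complex x y)) * indicator {-2..2} x \<partial>lborel)"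
proof -
  have [measurable]: "G \<in> borel_measurable borel"
    using G(1) borel_measurable_continuous_onI by blast
  have m: "(\<lambda>x. ennreal (G (Complex x y))) \<in> borel_measurable borel" by measurable
  have "linepath (Complex \<alpha> y) (Complex \<beta> y) t = Complex (\<alpha> + t * (\<beta> - \<alpha>)) y" for t
    by (simp add: linepath_def complex_eq_iff algebra_simps)
  then show ?thesis
    unfolding ennreal_integral_linepath[OF G] using nn_integral_segment_le_half[OF m seg] by simp
qed

lemma integral_vertical_segment_le:
  fixes G :: "complex \<Rightarrow> real"
  assumes G: "continuous_on UNIV G" "\<And>z. 0 \<le> G z"
    and seg: "2 \<le> \<bar>\<beta> - \<alpha>\<bar>" "\<alpha> \<in> {-2..2}" "\<beta> \<in> {-2..2}"
  shows "ennreal (integral {0..1} (\<lambda>t. G (linepath (Complex x \<alpha>) (Complex x \<beta>) t)))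
     \<le> ennreal (1/2) * (\<integral>\<^sup>+y. ennreal (G (Complex x y)) * indicator {-2..2} y \<partial>lborel)"
proof -
  have [measurable]: "G \<in> borel_measurable borel"
    using G(1) borel_measurable_continuous_onI by blast
  have m: "(\<lambda>y. ennreal (G (Complex x y))) \<in> borel_measurable borel" by measurable
  have "linepath (Complex x \<alpha>) (Complex x \<beta>) t = Complex x (\<alpha> + t * (\<beta> - \<alpha>))" for t
    by (simp add: linepath_def complex_eq_iff algebra_simps)
  then show ?thesis
    unfolding ennreal_integral_linepath[OF G] using nn_integral_segment_le_half[OF m seg] by simp
qed

lemma pi_norm_le_square_sides_nn_integral:
  fixes g :: "complex \<Rightarrow> complex"
  assumes g: "g holomorphic_on UNIV" and s: "s \<in> {1..2}"
  defines "H \<equiv> \<lambda>y. \<integral>\<^sup>+x. ennreal (norm (g (Complex x y))) * indicator {-2..2} x \<partial>lborel"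
    and "V \<equiv> \<lambda>x. \<integral>\<^sup>+y. ennreal (norm (g (Complex x y))) * indicator {-2..2} y \<partial>lborel"
  shows "ennreal (pi * norm (g 0)) \<le> ennreal (1/2) * ((H (-s) + H s) + (V (-s) + V s))"
proof -
  have cont: "continuous_on UNIV (\<lambda>z. norm (g z))"
    using holomorphic_on_imp_continuous_on[OF g] by (intro continuous_intros)
  define I where "I = (\<lambda>A B. integral {0..1} (\<lambda>t. norm (g (linepath A B t))))"
  have I_nonneg: "0 \<le> I A B" for A B
  proof -
    have "continuous_on {0..1} (\<lambda>t. norm (g (linepath A B t)))"
      by (intro continuous_on_compose2[OF cont] continuous_on_linepath) auto
    then show ?thesis unfolding I_def by (intro integral_nonneg integrable_continuous_interval) auto
  qed
  have "pi * norm (g 0) \<le> I (Complex (-s) (-s)) (Complex s (-s)) + I (Complex s (-s)) (Complex s s)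
      + I (Complex s s) (Complex (-s) s) + I (Complex (-s) s) (Complex (-s) (-s))"
    using pi_norm_le_square_side_integrals[OF g, of s] s unfolding I_def by simp
  then have "ennreal (pi * norm (g 0)) \<le> ennreal (I (Complex (-s) (-s)) (Complex s (-s)))
      + ennreal (I (Complex s (-s)) (Complex s s)) + ennreal (I (Complex s s) (Complex (-s) s))
      + ennreal (I (Complex (-s) s) (Complex (-s) (-s)))"
    using I_nonneg by (simp add: ennreal_plus[symmetric] add_nonneg_nonneg del: ennreal_plus)
  also have "\<dots> \<le> ennreal (1/2) * H (-s) + ennreal (1/2) * V s + ennreal (1/2) * H s + ennreal (1/2) * V (-s)"
    unfolding I_def H_def V_def using s
    by (intro add_mono integral_horizontal_segment_le[OF cont] integral_vertical_segment_le[OF cont]) auto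
  finally show ?thesis by (simp add: distrib_left ac_simps)
qed

lemma pi_norm_le_nn_integral_centred_square:
  fixes g :: "complex \<Rightarrow> complex"
  assumes g: "g holomorphic_on UNIV"
  shows "ennreal (pi * norm (g 0)) \<le> (\<integral>\<^sup>+z. ennreal (norm (g z)) * indicator (centred_square 2) z \<partial>lborel)"
proof -
  have [measurable]: "g \<in> borel_measurable borel"
    using g holomorphic_on_imp_continuous_on borel_measurable_continuous_onI by blast
  define H where "H = (\<lambda>y. \<integral>\<^sup>+x. ennreal (norm (g (Complex x y))) * indicator {-2..2} x \<partial>lborel)"
  define V where "V = (\<lambda>x. \<integral>\<^sup>+y. ennreal (norm (g (Complex x y))) * indicator {-2..2} y \<partial>lborel)"
  have [measurable]: "H \<in> borel_measurable borel" "V \<in> borel_measurable borel"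
    unfolding H_def V_def by measurable
  define S where "S = (\<integral>\<^sup>+z. ennreal (norm (g z)) * indicator (centred_square 2) z \<partial>lborel)"
  define E where "E = ennreal (pi * norm (g 0))"
  \<comment> \<open>average the estimate on the boundaries of the squares of half-side s over s \<in> [1, 2]\<close>
  have "E = (\<integral>\<^sup>+s. E * indicator {1..2::real} s \<partial>lborel)"
    by (simp add: nn_integral_cmult_indicator)
  also have "\<dots> \<le> (\<integral>\<^sup>+s. ennreal (1/2) * ((H (-s) + H s) * indicator {1..2} s + (V (-s) + V s) * indicator {1..2} s) \<partial>lborel)"
    using pi_norm_le_square_sides_nn_integral[OF g]
    by (intro nn_integral_mono) (auto simp: E_def H_def V_def indicator_def)
  also have "\<dots> = ennreal (1/2) * (\<integral>\<^sup>+s. (H (-s) + H s) * indicator {1..2} s + (V (-s) + V s) * indicator {1..2} s \<partial>lborel)"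
    by (rule nn_integral_cmult) measurable
  also have "(\<integral>\<^sup>+s. (H (-s) + H s) * indicator {1..2} s + (V (-s) + V s) * indicator {1..2} s \<partial>lborel)
      = (\<integral>\<^sup>+s. (H (-s) + H s) * indicator {1..2} s \<partial>lborel) + (\<integral>\<^sup>+s. (V (-s) + V s) * indicator {1..2} s \<partial>lborel)"
    by (rule nn_integral_add) measurable
  also have "\<dots> \<le> (\<integral>\<^sup>+y. H y * indicator {-2..2} y \<partial>lborel) + (\<integral>\<^sup>+x. V x * indicator {-2..2} x \<partial>lborel)"
    by (intro add_mono nn_integral_reflect_split) measurable
  also have "\<dots> = 2 * S"
    unfolding H_def V_def S_def nn_integral_centred_square[of "\<lambda>z. ennreal (norm (g z))", simplified]
    by (simp add: mult_2)
  finally have "E \<le> (ennreal (1/2) * ennreal 2) * S"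
    by (simp add: mult.assoc mult_left_mono)
  also have "ennreal (1/2) * ennreal 2 = 1" by (subst ennreal_mult[symmetric]) auto
  finally show ?thesis unfolding E_def S_def by simp
qed

lemma le_add_scaled_powr:
  fixes x l v :: real
  assumes "0 \<le> x" "0 < l" "1 \<le> v"
  shows "x \<le> l + l powr (1 - v) * x powr v"
proof (cases "x \<le> l")
  case True
  then show ?thesis by (simp add: add_increasing2)
next
  case False
  then have "0 < x" using assms by simp
  have "x = x powr v * x powr (1 - v)" using \<open>0 < x\<close> by (simp add: powr_add[symmetric])
  also have "\<dots> \<le> x powr v * l powr (1 - v)"
    using assms False by (intro mult_left_mono powr_mono2') auto
  finally show ?thesis using assms(2) by (simp add: mult.commute add_increasing)
qed

lemma pi_norm_le_young_nn_integral:
  fixes g :: "complex \<Rightarrow> complex"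
  assumes g: "g holomorphic_on UNIV" and l: "0 < l" and v: "1 \<le> v"
  shows "ennreal (pi * norm (g 0)) \<le> ennreal (16 * l) + ennreal (l powr (1 - v)) *
           (\<integral>\<^sup>+z. ennreal (norm (g z) powr v) * indicator (centred_square 2) z \<partial>lborel)"
proof -
  have [measurable]: "g \<in> borel_measurable borel"
    using g holomorphic_on_imp_continuous_on borel_measurable_continuous_onI by blast
  have "ennreal (pi * norm (g 0)) \<le> (\<integral>\<^sup>+z. ennreal (norm (g z)) * indicator (centred_square 2) z \<partial>lborel)"
    by (rule pi_norm_le_nn_integral_centred_square[OF g])
  also have "\<dots> \<le> (\<integral>\<^sup>+z. (ennreal l + ennreal (l powr (1 - v)) * ennreal (norm (g z) powr v)) * indicator (centred_square 2) z \<partial>lborel)"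
  proof (intro nn_integral_mono mult_right_mono)
    fix z
    have "ennreal (norm (g z)) \<le> ennreal (l + l powr (1 - v) * norm (g z) powr v)"
      by (intro ennreal_leI le_add_scaled_powr l v) simp
    then show "ennreal (norm (g z)) \<le> ennreal l + ennreal (l powr (1 - v)) * ennreal (norm (g z) powr v)"
      using l by (simp add: ennreal_plus ennreal_mult)
  qed auto
  also have "\<dots> = (\<integral>\<^sup>+z. ennreal l * indicator (centred_square 2) z + ennreal (l powr (1 - v)) *
           (ennreal (norm (g z) powr v) * indicator (centred_square 2) z) \<partial>lborel)"
    by (intro nn_integral_cong) (simp add: algebra_simps)
  also have "\<dots> = ennreal l * emeasure lborel (centred_square 2) + ennreal (l powr (1 - v)) *
           (\<integral>\<^sup>+z. ennreal (norm (g z) powr v) * indicator (centred_square 2) z \<partial>lborel)"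
    by (subst nn_integral_add) (auto simp: nn_integral_cmult nn_integral_cmult_indicator)
  also have "emeasure lborel (centred_square 2) = 16"
    by (subst emeasure_lborel_cbox) (auto simp: Basis_complex_def)
  finally show ?thesis
    using l by (simp add: ennreal_mult mult.commute)
qed

lemma powr_le_of_young_optimal_scale:
  fixes n A v :: real
  assumes n: "0 < n" and young: "pi * n \<le> 16 * (pi * n / 32) + (pi * n / 32) powr (1 - v) * A"
  shows "n powr v \<le> (2/pi) * (32/pi) powr (v - 1) * A"
proof -
  define l where "l = pi * n / 32"
  have l: "l > 0" using n by (simp add: l_def)
  have "pi * n / 2 \<le> l powr (1 - v) * A" using young by (simp add: l_def)
  then have "(pi * n / 2) * l powr (v - 1) \<le> (l powr (1 - v) * A) * l powr (v - 1)"
    using l by (intro mult_right_mono) auto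
  also have "\<dots> = A" using l by (simp add: powr_add[symmetric] mult.commute mult.left_commute)
  also have "(pi * n / 2) * l powr (v - 1) = (pi / 2) * (pi / 32) powr (v - 1) * n powr v"
  proof -
    have "l powr (v - 1) = (pi / 32) powr (v - 1) * n powr (v - 1)"
      unfolding l_def using n by (simp add: powr_mult[symmetric])
    moreover have "n * n powr (v - 1) = n powr v" using n by (simp add: powr_diff)
    ultimately show ?thesis by (simp add: algebra_simps)
  qed
  finally have lower: "(pi / 2) * (pi / 32) powr (v - 1) * n powr v \<le> A" .
  have "(32 / pi) powr (v - 1) * (pi / 32) powr (v - 1) = 1"
    by (simp add: powr_mult[symmetric])
  then have one: "(2/pi) * (32/pi) powr (v - 1) * ((pi / 2) * (pi / 32) powr (v - 1)) = 1"
    by (simp add: field_simps)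
  have "n powr v = (2/pi) * (32/pi) powr (v - 1) * ((pi / 2) * (pi / 32) powr (v - 1) * n powr v)"
    by (metis one mult.assoc mult_1)
  also have "\<dots> \<le> (2/pi) * (32/pi) powr (v - 1) * A"
    using lower by (intro mult_left_mono) auto
  finally show ?thesis .
qed

lemma norm_powr_le_nn_integral_centred_square:
  fixes g :: "complex \<Rightarrow> complex" and v :: real
  assumes g: "g holomorphic_on UNIV" and v: "1 \<le> v"
  shows "ennreal (norm (g 0) powr v) \<le> ennreal ((2/pi) * (32/pi) powr (v - 1)) *
     (\<integral>\<^sup>+z. ennreal (norm (g z) powr v) * indicator (centred_square 2) z \<partial>lborel)"
proof -
  define A where "A = (\<integral>\<^sup>+z. ennreal (norm (g z) powr v) * indicator (centred_square 2) z \<partial>lborel)"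
  define K where "K = (2/pi) * (32/pi) powr (v - 1)"
  define n where "n = norm (g 0)"
  have K: "K > 0" by (simp add: K_def)
  consider "A = \<infinity>" | "n = 0" | A' where "A = ennreal A'" "0 \<le> A'" "n > 0"
    by (cases A) (auto simp: n_def)
  then show ?thesis
  proof cases
    case 1
    then show ?thesis using K unfolding A_def K_def by (simp add: ennreal_mult_top)
  next
    case 2
    then show ?thesis unfolding n_def using v by simp
  next
    case 3
    \<comment> \<open>Young's inequality with the optimal scale\<close>
    define l where "l = pi * n / 32"
    have l: "l > 0" using \<open>n > 0\<close> by (simp add: l_def)
    have "ennreal (pi * n) \<le> ennreal (16 * l + l powr (1 - v) * A')"
      using pi_norm_le_young_nn_integral[OF g l v] l \<open>0 \<le> A'\<close>
      unfolding n_def A_def[symmetric] \<open>A = ennreal A'\<close> by (simp add: ennreal_mult ennreal_plus)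
    then have "pi * n \<le> 16 * l + l powr (1 - v) * A'"
      using l \<open>0 \<le> A'\<close> by (subst (asm) ennreal_le_iff) auto
    then have "n powr v \<le> K * A'"
      unfolding l_def K_def by (rule powr_le_of_young_optimal_scale[OF \<open>n > 0\<close>])
    then show ?thesis
      using K \<open>0 \<le> A'\<close> unfolding n_def K_def[symmetric] A_def[symmetric] \<open>A = ennreal A'\<close>
      by (simp add: ennreal_mult[symmetric] ennreal_leI)
  qed
qed

section \<open>Estimates in the Fock space\<close>

text \<open>
  The factor (2/pi) (32/pi)^(\<nu>-1) is the constant of the local L^\<nu> estimate on [-2,2]^2 above;
  exp (4 \<nu>) bounds the Gaussian factor of the Fock density on that square.
\<close>

definition fock_local_const :: "real \<Rightarrow> real" where
  "fock_local_const \<nu> = (2/pi) * (32/pi) powr (\<nu> - 1) * exp (4 * \<nu>)"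

lemma fock_local_const_pos: "fock_local_const \<nu> > 0"
  by (simp add: fock_local_const_def)

lemma fock_density_translate:
  "norm (f (\<zeta> + \<eta>) * exp (- cnj \<zeta> * \<eta>)) powr v
     = fock_density v f (\<zeta> + \<eta>) * exp (v * (norm \<zeta>)\<^sup>2 / 2) * exp (v * (norm \<eta>)\<^sup>2 / 2)"
proof -
  have sq: "(norm (\<zeta> + \<eta>))\<^sup>2 = (norm \<zeta>)\<^sup>2 + (norm \<eta>)\<^sup>2 + 2 * Re (cnj \<zeta> * \<eta>)"
    unfolding cmod_power2 by (simp add: power2_eq_square algebra_simps)
  have "exp (Re (- cnj \<zeta> * \<eta>)) powr v
      = exp (- v * (norm (\<zeta> + \<eta>))\<^sup>2 / 2) * exp (v * (norm \<zeta>)\<^sup>2 / 2) * exp (v * (norm \<eta>)\<^sup>2 / 2)"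
    unfolding powr_def sq by (simp add: exp_add[symmetric] field_simps)
  then show ?thesis by (simp add: norm_mult powr_mult mult.assoc)
qed

lemma norm_powr_le_nn_integral_square:
  fixes f :: "complex \<Rightarrow> complex" and v :: real
  assumes f: "f holomorphic_on UNIV" and v: "1 \<le> v"
  shows "ennreal (norm (f \<zeta>) powr v) \<le> ennreal (fock_local_const v * exp (v * (norm \<zeta>)\<^sup>2 / 2)) *
     (\<integral>\<^sup>+\<xi>. ennreal (fock_density v f \<xi>) * indicator (centred_square 2) (\<xi> - \<zeta>) \<partial>lborel)"
proof -
  define K where "K = (2/pi) * (32/pi) powr (v - 1)"
  have K: "K > 0" by (simp add: K_def)
  define g where "g = (\<lambda>\<eta>. f (\<zeta> + \<eta>) * exp (- cnj \<zeta> * \<eta>))"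
  have g: "g holomorphic_on UNIV" unfolding g_def
    by (intro holomorphic_intros holomorphic_on_compose_gen[OF _ f, unfolded o_def]) auto
  have [measurable]: "f \<in> borel_measurable borel"
    using f holomorphic_on_imp_continuous_on borel_measurable_continuous_onI by blast
  have bound_on_square: "norm (g \<eta>) powr v \<le> fock_density v f (\<zeta> + \<eta>) * exp (v * (norm \<zeta>)\<^sup>2 / 2) * exp (4 * v)"
    if "\<eta> \<in> centred_square 2" for \<eta>
  proof -
    have "(Re \<eta>)\<^sup>2 \<le> 4" "(Im \<eta>)\<^sup>2 \<le> 4"
      using that by (auto simp: in_cbox_complex_iff abs_le_iff
          intro!: power2_le_iff_abs_le[THEN iffD2, of 2, simplified])
    then have "(norm \<eta>)\<^sup>2 \<le> 8" by (simp add: cmod_power2)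
    then have "exp (v * (norm \<eta>)\<^sup>2 / 2) \<le> exp (4 * v)" using v by simp
    then show ?thesis
      unfolding g_def fock_density_translate by (intro mult_left_mono) auto
  qed
  have "ennreal (norm (f \<zeta>) powr v) \<le> ennreal K * (\<integral>\<^sup>+\<eta>. ennreal (norm (g \<eta>) powr v) * indicator (centred_square 2) \<eta> \<partial>lborel)"
    using norm_powr_le_nn_integral_centred_square[OF g v] by (simp add: g_def K_def)
  also have "\<dots> \<le> ennreal K * (\<integral>\<^sup>+\<eta>. ennreal (exp (v * (norm \<zeta>)\<^sup>2 / 2) * exp (4 * v)) *
                    (ennreal (fock_density v f (\<zeta> + \<eta>)) * indicator (centred_square 2) \<eta>) \<partial>lborel)"
    using bound_on_square
    by (intro mult_left_mono nn_integral_mono)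
       (auto simp: indicator_def ennreal_mult[symmetric] mult_ac intro!: ennreal_leI)
  also have "\<dots> = ennreal (K * exp (4 * v) * exp (v * (norm \<zeta>)\<^sup>2 / 2)) *
                    (\<integral>\<^sup>+\<eta>. ennreal (fock_density v f (\<zeta> + \<eta>)) * indicator (centred_square 2) \<eta> \<partial>lborel)"
    using K by (subst nn_integral_cmult) (auto simp: ennreal_mult mult_ac)
  also have "(\<integral>\<^sup>+\<eta>. ennreal (fock_density v f (\<zeta> + \<eta>)) * indicator (centred_square 2) \<eta> \<partial>lborel)
      = (\<integral>\<^sup>+\<xi>. ennreal (fock_density v f \<xi>) * indicator (centred_square 2) (\<xi> - \<zeta>) \<partial>lborel)"
    using nn_integral_lborel_translate[of "\<lambda>\<xi>. ennreal (fock_density v f \<xi>) * indicator (centred_square 2) (\<xi> - \<zeta>)" \<zeta>]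
    by (simp add: add.commute)
  finally show ?thesis unfolding K_def fock_local_const_def .
qed

lemma fock_density_le_nn_integral_square:
  fixes f :: "complex \<Rightarrow> complex" and v :: real
  assumes f: "f holomorphic_on UNIV" and v: "1 \<le> v"
  shows "ennreal (fock_density v f \<zeta>) \<le> ennreal (fock_local_const v) *
     (\<integral>\<^sup>+\<xi>. ennreal (fock_density v f \<xi>) * indicator (centred_square 2) (\<xi> - \<zeta>) \<partial>lborel)"
proof -
  have "ennreal (fock_density v f \<zeta>) = ennreal (exp (- v * (norm \<zeta>)\<^sup>2 / 2)) * ennreal (norm (f \<zeta>) powr v)"
    by (simp add: ennreal_mult mult.commute)
  also have "\<dots> \<le> ennreal (exp (- v * (norm \<zeta>)\<^sup>2 / 2)) * (ennreal (fock_local_const v * exp (v * (norm \<zeta>)\<^sup>2 / 2)) *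
      (\<integral>\<^sup>+\<xi>. ennreal (fock_density v f \<xi>) * indicator (centred_square 2) (\<xi> - \<zeta>) \<partial>lborel))"
    by (intro mult_left_mono norm_powr_le_nn_integral_square f v) auto
  also have "\<dots> = ennreal (exp (- v * (norm \<zeta>)\<^sup>2 / 2) * (fock_local_const v * exp (v * (norm \<zeta>)\<^sup>2 / 2))) *
      (\<integral>\<^sup>+\<xi>. ennreal (fock_density v f \<xi>) * indicator (centred_square 2) (\<xi> - \<zeta>) \<partial>lborel)"
    using fock_local_const_pos[of v] by (simp add: ennreal_mult mult.assoc)
  also have "exp (- v * (norm \<zeta>)\<^sup>2 / 2) * (fock_local_const v * exp (v * (norm \<zeta>)\<^sup>2 / 2)) = fock_local_const v"
    by (simp add: mult_ac exp_add[symmetric])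
  finally show ?thesis .
qed

lemma fock_density_le_fock_integral:
  fixes f :: "complex \<Rightarrow> complex" and v :: real
  assumes f: "f holomorphic_on UNIV" and v: "1 \<le> v"
  shows "ennreal (fock_density v f \<zeta>) \<le> ennreal (fock_local_const v) * fock_integral v f"
proof -
  have "(\<integral>\<^sup>+\<xi>. ennreal (fock_density v f \<xi>) * indicator (centred_square 2) (\<xi> - \<zeta>) \<partial>lborel)
      \<le> fock_integral v f"
    unfolding fock_integral_def by (intro nn_integral_mono) (auto simp: indicator_def)
  then show ?thesis
    using fock_density_le_nn_integral_square[OF f v, of \<zeta>] by (meson mult_left_mono order_trans zero_le)
qed

lemma fock_norm_nonneg: "0 \<le> fock_norm v g"
  by (simp add: fock_norm_def)

lemma fock_integral_finite: "g \<in> fock_space v \<Longrightarrow> fock_integral v g < \<infinity>"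
  by (simp add: fock_space_def)

lemma fock_norm_powr:
  assumes "g \<in> fock_space v" "0 < v"
  shows "fock_norm v g powr v = v / (2 * pi) * enn2real (fock_integral v g)"
  using assms unfolding fock_norm_def by (simp add: powr_powr)

lemma fock_norm_ge_of_le_fock_integral:
  assumes "0 < v" "fock_integral v g < \<infinity>" "0 \<le> Y" "ennreal Y \<le> fock_integral v g"
  shows "(v / (2 * pi) * Y) powr (1 / v) \<le> fock_norm v g"
proof -
  have "Y \<le> enn2real (fock_integral v g)"
    using enn2real_mono[OF assms(4)] assms by simp
  then show ?thesis unfolding fock_norm_def using assms
    by (intro powr_mono2) (auto intro!: mult_left_mono divide_right_mono)
qed

lemma fock_norm_le_of_fock_integral_le:
  assumes v: "0 < v" and f: "f \<in> fock_space v" and C: "0 \<le> C"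
    and le: "fock_integral v g \<le> ennreal C * fock_integral v f"
  shows "fock_norm v g \<le> C powr (1 / v) * fock_norm v f"
proof -
  obtain X where X: "fock_integral v f = ennreal X" "0 \<le> X"
    using fock_integral_finite[OF f] by (cases "fock_integral v f") auto
  have "fock_integral v g \<le> ennreal (C * X)"
    using le X C by (simp add: ennreal_mult)
  then have "enn2real (fock_integral v g) \<le> C * X"
    using enn2real_mono[of "fock_integral v g" "ennreal (C * X)"] C X by simp
  then have "fock_norm v g \<le> (v / (2 * pi) * (C * X)) powr (1 / v)"
    unfolding fock_norm_def using v by (intro powr_mono2) (auto intro!: divide_right_mono mult_left_mono)
  also have "\<dots> = C powr (1 / v) * fock_norm v f"
    unfolding fock_norm_def X(1) using C X v by (simp add: powr_mult[symmetric] mult_ac)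
  finally show ?thesis .
qed

lemma enn2real_fock_integral_le_of_fock_norm_le:
  assumes v: "0 < v" and "f \<in> fock_space v" "g \<in> fock_space v"
    and le: "fock_norm v g \<le> C * fock_norm v f"
  shows "enn2real (fock_integral v g) \<le> \<bar>C\<bar> powr v * enn2real (fock_integral v f)"
proof -
  have "fock_norm v g \<le> \<bar>C\<bar> * fock_norm v f"
    using le fock_norm_nonneg[of v f] by (meson abs_ge_self mult_right_mono order_trans)
  then have "fock_norm v g powr v \<le> (\<bar>C\<bar> * fock_norm v f) powr v"
    using v by (intro powr_mono2) (auto simp: fock_norm_nonneg)
  also have "\<dots> = \<bar>C\<bar> powr v * fock_norm v f powr v"
    by (simp add: powr_mult fock_norm_nonneg)
  finally show ?thesis
    using assms by (simp add: fock_norm_powr field_simps)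
qed

lemma fock_integral_one_finite:
  assumes "0 < v"
  shows "fock_integral v (\<lambda>_. 1) < \<infinity>"
proof -
  have "fock_integral v (\<lambda>_. 1) = (\<integral>\<^sup>+z. ennreal (exp (- (v/2) * (norm (z::complex))\<^sup>2)) \<partial>lborel)"
    unfolding fock_integral_def by simp
  also have "\<dots> < \<infinity>" using assms by (intro nn_integral_complex_gaussian_finite) simp
  finally show ?thesis .
qed

lemma one_in_fock_space: "0 < v \<Longrightarrow> (\<lambda>_. 1) \<in> fock_space v"
  using fock_integral_one_finite by (simp add: fock_space_def)

lemma fock_integral_exp_cnj_mult:
  "fock_integral v (\<lambda>z. exp (cnj \<xi> * z)) = ennreal (exp (v * (norm \<xi>)\<^sup>2 / 2)) * fock_integral v (\<lambda>_. 1)"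
proof -
  have density: "fock_density v (\<lambda>z. exp (cnj \<xi> * z)) z
      = exp (v * (norm \<xi>)\<^sup>2 / 2) * fock_density v (\<lambda>_. 1) (z + - \<xi>)" for z
  proof -
    have sq: "(norm (z + - \<xi>))\<^sup>2 = (norm \<xi>)\<^sup>2 + (norm z)\<^sup>2 - 2 * Re (cnj \<xi> * z)"
      unfolding cmod_power2 by (simp add: power2_eq_square algebra_simps)
    have exponent: "v * Re (cnj \<xi> * z) + - v * (norm z)\<^sup>2 / 2 = v * (norm \<xi>)\<^sup>2 / 2 + - v * (norm (z + - \<xi>))\<^sup>2 / 2"
      unfolding sq by (simp add: field_simps)
    have "fock_density v (\<lambda>z. exp (cnj \<xi> * z)) z = exp (v * Re (cnj \<xi> * z) + - v * (norm z)\<^sup>2 / 2)"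
      by (simp add: norm_exp_eq_Re powr_def exp_add[symmetric] mult.commute)
    also have "\<dots> = exp (v * (norm \<xi>)\<^sup>2 / 2) * exp (- v * (norm (z + - \<xi>))\<^sup>2 / 2)"
      unfolding exponent exp_add ..
    finally show ?thesis by simp
  qed
  have "fock_integral v (\<lambda>z. exp (cnj \<xi> * z))
      = ennreal (exp (v * (norm \<xi>)\<^sup>2 / 2)) * (\<integral>\<^sup>+z. ennreal (fock_density v (\<lambda>_. 1) (z + - \<xi>)) \<partial>lborel)"
    unfolding fock_integral_def density by (subst nn_integral_cmult[symmetric]) (auto simp: ennreal_mult)
  also have "(\<integral>\<^sup>+z. ennreal (fock_density v (\<lambda>_. 1) (z + - \<xi>)) \<partial>lborel) = fock_integral v (\<lambda>_. 1)"
    unfolding fock_integral_def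
    by (rule nn_integral_lborel_translate[where f = "\<lambda>z. ennreal (fock_density v (\<lambda>_. 1) z)"]) measurable
  finally show ?thesis .
qed

lemma exp_cnj_mult_in_fock_space:
  "0 < v \<Longrightarrow> (\<lambda>z. exp (cnj \<xi> * z)) \<in> fock_space v"
  using fock_integral_one_finite[of v]
  by (auto intro!: holomorphic_intros simp: fock_space_def fock_integral_exp_cnj_mult ennreal_mult_less_top)

lemma funpow_in_fock_space:
  "bounded_on_fock v T \<Longrightarrow> f \<in> fock_space v \<Longrightarrow> (T ^^ n) f \<in> fock_space v"
  by (induction n) (auto simp: bounded_on_fock_def)

lemma fock_density_le_enn2real_fock_integral:
  assumes "g \<in> fock_space v" "1 \<le> v"
  shows "fock_density v g \<zeta> \<le> fock_local_const v * enn2real (fock_integral v g)"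
proof -
  obtain X where X: "fock_integral v g = ennreal X" "0 \<le> X"
    using fock_integral_finite[OF assms(1)] by (cases "fock_integral v g") auto
  have "ennreal (fock_density v g \<zeta>) \<le> ennreal (fock_local_const v * X)"
    using fock_density_le_fock_integral[of g v \<zeta>] assms fock_local_const_pos[of v]
    by (simp add: fock_space_def X ennreal_mult)
  then show ?thesis
    using X fock_local_const_pos[of v] by (simp add: ennreal_le_iff)
qed

section \<open>The quadratic exponent\<close>

definition quad_form :: "complex \<Rightarrow> complex \<Rightarrow> complex \<Rightarrow> real" where
  "quad_form a r u = (1 - (norm a)\<^sup>2) / 2 * (norm u)\<^sup>2 - Re (r * u\<^sup>2)"

definition log_gain :: "complex \<Rightarrow> complex \<Rightarrow> complex \<Rightarrow> complex \<Rightarrow> real" where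
  "log_gain a r l u = Re (l * u) - quad_form a r u"

lemma Re_mult_power2_le: "Re (r * u\<^sup>2) \<le> norm r * (norm u)\<^sup>2"
  using complex_Re_le_cmod[of "r * u\<^sup>2"] by (simp add: norm_mult norm_power)

lemma quad_form_ge:
  assumes "norm r \<le> (1 - (norm a)\<^sup>2) / 2"
  shows "norm r * (norm u)\<^sup>2 - Re (r * u\<^sup>2) \<le> quad_form a r u"
proof -
  have "norm r * (norm u)\<^sup>2 \<le> (1 - (norm a)\<^sup>2) / 2 * (norm u)\<^sup>2"
    using assms by (intro mult_right_mono) auto
  then show ?thesis unfolding quad_form_def by linarith
qed

lemma quad_form_nonneg: "norm r \<le> (1 - (norm a)\<^sup>2) / 2 \<Longrightarrow> 0 \<le> quad_form a r u"
  using quad_form_ge[of r a u] Re_mult_power2_le[of r u] by linarith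

lemma quad_form_le_norm_power2:
  assumes a: "norm a < 1" and r: "norm r \<le> (1 - (norm a)\<^sup>2) / 2"
  shows "quad_form a r u \<le> (norm u)\<^sup>2"
proof -
  have "- Re (r * u\<^sup>2) \<le> norm r * (norm u)\<^sup>2"
    using complex_Re_le_cmod[of "- (r * u\<^sup>2)"] by (simp add: norm_mult norm_power)
  also have "\<dots> \<le> (1 - (norm a)\<^sup>2) / 2 * (norm u)\<^sup>2" using r by (intro mult_right_mono) auto
  finally have "quad_form a r u \<le> (1 - (norm a)\<^sup>2) * (norm u)\<^sup>2" unfolding quad_form_def by linarith
  also have "\<dots> \<le> (norm u)\<^sup>2" using a by (intro mult_left_le_one_le) (auto intro: power_le_one)
  finally show ?thesis .
qed

lemma quad_form_scaleR: "quad_form a r (complex_of_real s * u) = s\<^sup>2 * quad_form a r u"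
  unfolding quad_form_def by (simp add: norm_mult power_mult_distrib algebra_simps)

lemma log_gain_scaleR:
  "log_gain a r l (complex_of_real s * u) = s * Re (l * u) - s\<^sup>2 * quad_form a r u"
  unfolding log_gain_def quad_form_scaleR by (simp add: algebra_simps)

lemma log_gain_ge:
  assumes a: "norm a < 1" and r: "norm r \<le> (1 - (norm a)\<^sup>2) / 2" and t: "norm t \<le> 1"
  shows "- (norm l + 1) * norm t \<le> log_gain a r l t"
proof -
  have "- (norm l * norm t) \<le> Re (l * t)"
    using complex_Re_le_cmod[of "- (l * t)"] by (simp add: norm_mult)
  moreover have "quad_form a r t \<le> (norm t)\<^sup>2" using quad_form_le_norm_power2[OF a r] .
  moreover have "(norm t)\<^sup>2 \<le> norm t" using t by (simp add: power2_eq_square mult_left_le_one_le)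
  ultimately show ?thesis unfolding log_gain_def by (simp add: algebra_simps)
qed

lemma geometric_sum_le: "0 \<le> (x::real) \<Longrightarrow> x < 1 \<Longrightarrow> (\<Sum>k<n. x ^ k) \<le> 1 / (1 - x)"
  by (simp add: sum_gp_strict divide_right_mono)

lemma orbit_sum_log_gain_ge:
  assumes a: "norm a < 1" and r: "norm r \<le> (1 - (norm a)\<^sup>2) / 2" and u: "norm u \<le> 1"
  shows "- (norm l + 1) / (1 - norm a) \<le> (\<Sum>k<n. log_gain a r l (a ^ k * u))"
proof -
  have "(norm l + 1) * (\<Sum>k<n. norm a ^ k) \<le> (norm l + 1) * (1 / (1 - norm a))"
    using geometric_sum_le[of "norm a" n] a by (intro mult_left_mono) auto
  then have "- ((norm l + 1) * (1 / (1 - norm a))) \<le> - ((norm l + 1) * (\<Sum>k<n. norm a ^ k))"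
    by (rule le_imp_neg_le)
  then have "- (norm l + 1) / (1 - norm a) \<le> - ((norm l + 1) * (\<Sum>k<n. norm a ^ k))"
    unfolding times_divide_eq_right mult_1_right minus_divide_left .
  also have "\<dots> = (\<Sum>k<n. - (norm l + 1) * norm a ^ k)"
    by (simp only: mult_minus_left sum_distrib_left sum_negf)
  also have "\<dots> \<le> (\<Sum>k<n. log_gain a r l (a ^ k * u))"
  proof (intro sum_mono)
    fix k
    have nk: "norm (a ^ k * u) \<le> norm a ^ k" using u by (simp add: norm_mult norm_power mult_left_le)
    also have "\<dots> \<le> 1" using a by (simp add: power_le_one)
    finally have "- (norm l + 1) * norm (a ^ k * u) \<le> log_gain a r l (a ^ k * u)"
      by (rule log_gain_ge[OF a r])
    moreover have "- (norm l + 1) * norm a ^ k \<le> - (norm l + 1) * norm (a ^ k * u)"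
      using nk norm_ge_zero[of l] by (intro mult_left_mono_neg) linarith+
    ultimately show "- (norm l + 1) * norm a ^ k \<le> log_gain a r l (a ^ k * u)" by linarith
  qed
  finally show ?thesis .
qed

lemma linear_minus_quadratic_le: "(c::real) > 0 \<Longrightarrow> 2 * A * x - c * x\<^sup>2 \<le> A\<^sup>2 / c"
proof -
  assume c: "c > 0"
  have "0 \<le> (c * x - A)\<^sup>2" by simp
  then have "2 * A * x * c - c * x\<^sup>2 * c \<le> A\<^sup>2" by (simp add: power2_eq_square algebra_simps)
  then show ?thesis using c by (simp add: field_simps)
qed

lemma norm_one_plus_power2_less:
  assumes "Im a \<noteq> 0"
  shows "norm (1 + a\<^sup>2) < 1 + (norm a)\<^sup>2"
proof -
  have "(norm (1 + a\<^sup>2))\<^sup>2 = (1 + (norm a)\<^sup>2)\<^sup>2 - 4 * (Im a)\<^sup>2"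
    unfolding cmod_power2 by (simp add: power2_eq_square algebra_simps)
  also have "\<dots> < (1 + (norm a)\<^sup>2)\<^sup>2" using assms by simp
  finally show ?thesis
    by (rule power2_less_imp_less) simp
qed

locale bounded_log_gain =
  fixes a r l :: complex and M :: real
  assumes norm_a: "0 < norm a" "norm a < 1"
    and norm_r: "0 < norm r" "norm r \<le> (1 - (norm a)\<^sup>2) / 2"
    and log_gain_le: "\<And>u. log_gain a r l u \<le> M"
begin

lemma M_nonneg: "0 \<le> M"
  using log_gain_le[of 0] by (simp add: log_gain_def quad_form_def)

lemma Re_power2_le_quad_form: "(Re (l * u))\<^sup>2 \<le> 4 * M * quad_form a r u"
proof (cases "quad_form a r u = 0")
  case True
  \<comment> \<open>otherwise log_gain would be unbounded on the real multiples of u\<close>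
  have "Re (l * u) = 0"
  proof (rule ccontr)
    assume L: "Re (l * u) \<noteq> 0"
    define s where "s = (\<bar>M\<bar> + 1) / Re (l * u)"
    have "log_gain a r l (complex_of_real s * u) = \<bar>M\<bar> + 1"
      using L True unfolding log_gain_scaleR s_def by simp
    with log_gain_le[of "complex_of_real s * u"] show False by linarith
  qed
  then show ?thesis using True by simp
next
  case False
  then have hp: "quad_form a r u > 0" using quad_form_nonneg[OF norm_r(2), of u] by simp
  define s where "s = Re (l * u) / (2 * quad_form a r u)"
  have "log_gain a r l (complex_of_real s * u) = (Re (l * u))\<^sup>2 / (4 * quad_form a r u)"
    unfolding log_gain_scaleR s_def using hp by (simp add: power2_eq_square field_simps)
  with log_gain_le[of "complex_of_real s * u"] have "(Re (l * u))\<^sup>2 / (4 * quad_form a r u) \<le> M" by simp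
  then show ?thesis using hp by (simp add: field_simps)
qed

lemma log_gain_le_sqrt_quad_form:
  "log_gain a r l u \<le> 2 * sqrt M * sqrt (quad_form a r u) - quad_form a r u"
proof -
  have "\<bar>Re (l * u)\<bar> = sqrt ((Re (l * u))\<^sup>2)" by simp
  also have "\<dots> \<le> sqrt (4 * M * quad_form a r u)"
    using Re_power2_le_quad_form by (rule real_sqrt_le_mono)
  also have "\<dots> = 2 * sqrt M * sqrt (quad_form a r u)" by (simp add: real_sqrt_mult)
  finally show ?thesis unfolding log_gain_def by linarith
qed

lemma log_gain_le_strip:
  obtains \<sigma> where "norm \<sigma> = 1" "\<And>u. log_gain a r l u \<le> 2 * M - norm r * (Im (\<sigma> * u))\<^sup>2"
proof -
  define \<sigma> where "\<sigma> = csqrt (r / complex_of_real (norm r))"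
  have \<sigma>1: "norm \<sigma> = 1" using norm_r by (simp add: \<sigma>_def norm_divide)
  have rs: "r = complex_of_real (norm r) * \<sigma>\<^sup>2" using norm_r by (simp add: \<sigma>_def)
  have "log_gain a r l u \<le> 2 * M - norm r * (Im (\<sigma> * u))\<^sup>2" for u
  proof -
    have "norm r * (norm u)\<^sup>2 - Re (r * u\<^sup>2) = norm r * ((norm (\<sigma> * u))\<^sup>2 - Re ((\<sigma> * u)\<^sup>2))"
      by (subst (2) rs) (simp add: norm_mult \<sigma>1 power_mult_distrib algebra_simps)
    also have "(norm (\<sigma> * u))\<^sup>2 - Re ((\<sigma> * u)\<^sup>2) = 2 * (Im (\<sigma> * u))\<^sup>2"
      unfolding cmod_power2 by (simp add: power2_eq_square)
    finally have strip: "2 * norm r * (Im (\<sigma> * u))\<^sup>2 \<le> quad_form a r u"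
      using quad_form_ge[OF norm_r(2), of u] by simp
    \<comment> \<open>AM-GM: 2 sqrt M sqrt H \<le> H / 2 + 2 M\<close>
    have "0 \<le> (sqrt (quad_form a r u) / sqrt 2 - sqrt 2 * sqrt M)\<^sup>2" by simp
    also have "\<dots> = quad_form a r u / 2 - 2 * sqrt M * sqrt (quad_form a r u) + 2 * M"
      using quad_form_nonneg[OF norm_r(2), of u] M_nonneg by (simp add: power2_diff power_divide power_mult_distrib)
    finally show ?thesis
      using log_gain_le_sqrt_quad_form[of u] strip by linarith
  qed
  with \<sigma>1 that show ?thesis by blast
qed

lemma orbit_sum_le:
  "(\<Sum>k<n. log_gain a r l (a ^ k * u))
     \<le> 2 * sqrt M * (\<Sum>k<n. sqrt (quad_form a r (a ^ k * u))) - (\<Sum>k<n. quad_form a r (a ^ k * u))"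
proof -
  have "(\<Sum>k<n. log_gain a r l (a ^ k * u))
      \<le> (\<Sum>k<n. 2 * sqrt M * sqrt (quad_form a r (a ^ k * u)) - quad_form a r (a ^ k * u))"
    by (intro sum_mono log_gain_le_sqrt_quad_form)
  then show ?thesis by (simp add: sum_subtractf sum_distrib_left)
qed

lemma sum_sqrt_quad_form_orbit_le:
  "(\<Sum>k<n. sqrt (quad_form a r (a ^ k * u))) \<le> norm u / (1 - norm a)"
proof -
  have "(\<Sum>k<n. sqrt (quad_form a r (a ^ k * u))) \<le> (\<Sum>k<n. norm u * norm a ^ k)"
  proof (intro sum_mono)
    fix k
    have "sqrt (quad_form a r (a ^ k * u)) \<le> sqrt ((norm (a ^ k * u))\<^sup>2)"
      by (intro real_sqrt_le_mono quad_form_le_norm_power2 norm_a norm_r)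
    then show "sqrt (quad_form a r (a ^ k * u)) \<le> norm u * norm a ^ k"
      by (simp add: norm_mult norm_power mult.commute)
  qed
  also have "\<dots> = norm u * (\<Sum>k<n. norm a ^ k)" by (simp add: sum_distrib_left)
  also have "\<dots> \<le> norm u * (1 / (1 - norm a))" using norm_a by (intro mult_left_mono geometric_sum_le) auto
  finally show ?thesis by simp
qed

text \<open>
  For real a the form quad_form a r may be degenerate, but then it only scales along the orbit
  of u; for non-real a it is the sum of the first two orbit terms that is positive definite.
\<close>

lemma orbit_sum_le_real:
  assumes "Im a = 0"
  shows "(\<Sum>k<n. log_gain a r l (a ^ k * u)) \<le> (sqrt M / (1 - norm a))\<^sup>2"
proof (cases n)
  case 0
  then show ?thesis by simp
next
  case (Suc m)
  define \<alpha> where "\<alpha> = Re a"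
  have a\<alpha>: "a = complex_of_real \<alpha>" using assms by (simp add: \<alpha>_def complex_eq_iff)
  have scale: "quad_form a r (a ^ k * u) = (\<alpha> ^ k)\<^sup>2 * quad_form a r u" for k
    unfolding a\<alpha> of_real_power[symmetric] quad_form_scaleR ..
  define x where "x = sqrt (quad_form a r u)"
  have x: "0 \<le> x" "x\<^sup>2 = quad_form a r u" using quad_form_nonneg[OF norm_r(2), of u] by (auto simp: x_def)
  have "(\<Sum>k<n. sqrt (quad_form a r (a ^ k * u))) = (\<Sum>k<n. norm a ^ k) * x"
    by (simp add: scale real_sqrt_mult power_abs x_def sum_distrib_right a\<alpha>[symmetric])
       (simp add: a\<alpha>)
  also have "\<dots> \<le> (1 / (1 - norm a)) * x"
    using norm_a x by (intro mult_right_mono geometric_sum_le) auto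
  finally have sqrt_sum: "(\<Sum>k<n. sqrt (quad_form a r (a ^ k * u))) \<le> x / (1 - norm a)" by simp
  have "quad_form a r u \<le> (\<Sum>k<n. quad_form a r (a ^ k * u))"
    unfolding Suc lessThan_Suc_eq_insert_0 using quad_form_nonneg[OF norm_r(2)]
    by (simp add: sum.reindex sum_nonneg)
  then have "(\<Sum>k<n. log_gain a r l (a ^ k * u)) \<le> 2 * (sqrt M / (1 - norm a)) * x - 1 * x\<^sup>2"
    using orbit_sum_le[where n=n and u=u] mult_left_mono[OF sqrt_sum, of "2 * sqrt M"] x M_nonneg by simp
  also have "\<dots> \<le> (sqrt M / (1 - norm a))\<^sup>2 / 1" by (rule linear_minus_quadratic_le) simp
  finally show ?thesis by simp
qed

lemma orbit_sum_le_nonreal: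
  assumes "Im a \<noteq> 0"
  defines "c \<equiv> norm r * ((1 + (norm a)\<^sup>2) - norm (1 + a\<^sup>2))"
  shows "(\<Sum>k<n. log_gain a r l (a ^ k * u)) \<le> max M ((sqrt M / (1 - norm a))\<^sup>2 / c)"
proof (cases "n \<ge> 2")
  case True
  have c: "c > 0" using norm_one_plus_power2_less[OF assms(1)] norm_r by (simp add: c_def)
  have "c * (norm u)\<^sup>2 \<le> quad_form a r u + quad_form a r (a * u)"
  proof -
    have "Re (r * (1 + a\<^sup>2) * u\<^sup>2) \<le> norm r * norm (1 + a\<^sup>2) * (norm u)\<^sup>2"
      using complex_Re_le_cmod[of "r * (1 + a\<^sup>2) * u\<^sup>2"] by (simp add: norm_mult norm_power)
    moreover have "Re (r * (1 + a\<^sup>2) * u\<^sup>2) = Re (r * u\<^sup>2) + Re (r * (a * u)\<^sup>2)"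
      by (simp add: algebra_simps power_mult_distrib)
    moreover have "(norm (a * u))\<^sup>2 = (norm a)\<^sup>2 * (norm u)\<^sup>2" by (simp add: norm_mult power_mult_distrib)
    ultimately show ?thesis
      using quad_form_ge[OF norm_r(2), of u] quad_form_ge[OF norm_r(2), of "a * u"] unfolding c_def
      by (simp add: algebra_simps)
  qed
  also have "\<dots> \<le> (\<Sum>k<n. quad_form a r (a ^ k * u))"
  proof -
    have "{0, 1} \<subseteq> {..<n}" using True by auto
    then have "(\<Sum>k\<in>{0,1}. quad_form a r (a ^ k * u)) \<le> (\<Sum>k<n. quad_form a r (a ^ k * u))"
      by (intro sum_mono2) (auto simp: quad_form_nonneg[OF norm_r(2)])
    then show ?thesis by simp
  qed
  finally have "(\<Sum>k<n. log_gain a r l (a ^ k * u)) \<le> 2 * (sqrt M / (1 - norm a)) * norm u - c * (norm u)\<^sup>2"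
    using orbit_sum_le[where n=n and u=u] mult_left_mono[OF sum_sqrt_quad_form_orbit_le[where n=n and u=u], of "2 * sqrt M"] M_nonneg
    by simp
  also have "\<dots> \<le> (sqrt M / (1 - norm a))\<^sup>2 / c" by (rule linear_minus_quadratic_le[OF c])
  finally show ?thesis by simp
next
  case False
  then have "n = 0 \<or> n = 1" by auto
  then show ?thesis using log_gain_le[of u] M_nonneg by auto
qed

lemma orbit_sums_bounded: "\<exists>B. \<forall>n u. (\<Sum>k<n. log_gain a r l (a ^ k * u)) \<le> B"
  using orbit_sum_le_real orbit_sum_le_nonreal by (cases "Im a = 0") blast+

end

section \<open>Gaussian strips\<close>

lemma nn_integral_gaussian_affine_le:
  fixes \<kappa> \<alpha> s :: real
  assumes "1/2 \<le> \<alpha>\<^sup>2"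
  shows "(\<integral>\<^sup>+y. ennreal (exp (- \<kappa> * (\<alpha> * y + s)\<^sup>2)) \<partial>lborel)
     \<le> ennreal (sqrt 2) * (\<integral>\<^sup>+t. ennreal (exp (- \<kappa> * t\<^sup>2)) \<partial>lborel)"
proof -
  have "\<alpha> \<noteq> 0" using assms by auto
  have "1 \<le> sqrt (2 * \<alpha>\<^sup>2)" using assms by simp
  then have one_le: "1 \<le> ennreal (sqrt 2 * \<bar>\<alpha>\<bar>)" by (simp add: real_sqrt_mult)
  have "(\<integral>\<^sup>+t. ennreal (exp (- \<kappa> * t\<^sup>2)) \<partial>lborel)
      = ennreal \<bar>\<alpha>\<bar> * (\<integral>\<^sup>+y. ennreal (exp (- \<kappa> * (s + \<alpha> * y)\<^sup>2)) \<partial>lborel)"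
    by (rule nn_integral_real_affine[OF _ \<open>\<alpha> \<noteq> 0\<close>]) simp
  then have "ennreal (sqrt 2) * (\<integral>\<^sup>+t. ennreal (exp (- \<kappa> * t\<^sup>2)) \<partial>lborel)
      = ennreal (sqrt 2 * \<bar>\<alpha>\<bar>) * (\<integral>\<^sup>+y. ennreal (exp (- \<kappa> * (\<alpha> * y + s)\<^sup>2)) \<partial>lborel)"
    by (simp add: ennreal_mult mult.assoc add.commute)
  then show ?thesis
    using mult_right_mono[OF one_le zero_le] by simp
qed

lemma nn_integral_gaussian_strip_square_le_transversal:
  fixes \<kappa> \<alpha> \<beta> x1 y1 R :: real
  assumes "1/2 \<le> \<alpha>\<^sup>2" and R: "0 \<le> R"
  shows "(\<integral>\<^sup>+x. \<integral>\<^sup>+y. ennreal (exp (- \<kappa> * (\<alpha> * y + \<beta> * x)\<^sup>2)) * indicator {x1..x1 + 2 * R} x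
            * indicator {y1..y1 + 2 * R} y \<partial>lborel \<partial>lborel)
     \<le> ennreal (2 * R * sqrt 2) * (\<integral>\<^sup>+t. ennreal (exp (- \<kappa> * t\<^sup>2)) \<partial>lborel)"
proof -
  define G where "G = (\<integral>\<^sup>+t. ennreal (exp (- \<kappa> * t\<^sup>2)) \<partial>lborel)"
  have "(\<integral>\<^sup>+y. ennreal (exp (- \<kappa> * (\<alpha> * y + \<beta> * x)\<^sup>2)) * indicator {x1..x1 + 2 * R} x
          * indicator {y1..y1 + 2 * R} y \<partial>lborel)
      \<le> ennreal (sqrt 2) * G * indicator {x1..x1 + 2 * R} x" for x
  proof -
    have "(\<integral>\<^sup>+y. ennreal (exp (- \<kappa> * (\<alpha> * y + \<beta> * x)\<^sup>2)) * indicator {x1..x1 + 2 * R} x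
          * indicator {y1..y1 + 2 * R} y \<partial>lborel)
        \<le> (\<integral>\<^sup>+y. ennreal (exp (- \<kappa> * (\<alpha> * y + \<beta> * x)\<^sup>2)) \<partial>lborel) * indicator {x1..x1 + 2 * R} x"
      by (subst nn_integral_multc[symmetric]) (auto intro!: nn_integral_mono simp: indicator_def)
    also have "\<dots> \<le> ennreal (sqrt 2) * G * indicator {x1..x1 + 2 * R} x"
      unfolding G_def by (intro mult_right_mono nn_integral_gaussian_affine_le assms(1)) auto
    finally show ?thesis .
  qed
  then have "(\<integral>\<^sup>+x. \<integral>\<^sup>+y. ennreal (exp (- \<kappa> * (\<alpha> * y + \<beta> * x)\<^sup>2)) * indicator {x1..x1 + 2 * R} x
            * indicator {y1..y1 + 2 * R} y \<partial>lborel \<partial>lborel)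
      \<le> (\<integral>\<^sup>+x. ennreal (sqrt 2) * G * indicator {x1..x1 + 2 * R} x \<partial>lborel)"
    by (intro nn_integral_mono)
  also have "\<dots> = ennreal (sqrt 2) * G * ennreal (2 * R)"
    using R by (simp add: nn_integral_cmult_indicator)
  also have "\<dots> = ennreal (2 * R * sqrt 2) * G"
    using R by (simp add: ennreal_mult mult_ac)
  finally show ?thesis unfolding G_def .
qed

lemma nn_integral_gaussian_strip_square_le:
  fixes \<kappa> \<alpha> \<beta> x1 y1 R :: real
  assumes "\<alpha>\<^sup>2 + \<beta>\<^sup>2 = 1" and R: "0 \<le> R"
  shows "(\<integral>\<^sup>+x. \<integral>\<^sup>+y. ennreal (exp (- \<kappa> * (\<alpha> * y + \<beta> * x)\<^sup>2)) * indicator {x1..x1 + 2 * R} x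
            * indicator {y1..y1 + 2 * R} y \<partial>lborel \<partial>lborel)
     \<le> ennreal (2 * R * sqrt 2) * (\<integral>\<^sup>+t. ennreal (exp (- \<kappa> * t\<^sup>2)) \<partial>lborel)"
proof (cases "1/2 \<le> \<alpha>\<^sup>2")
  case True
  then show ?thesis using nn_integral_gaussian_strip_square_le_transversal[OF _ R] by blast
next
  \<comment> \<open>integrate first along the coordinate that is not almost parallel to the strip\<close>
  case False
  then have "1/2 \<le> \<beta>\<^sup>2" using assms(1) by linarith
  have "(\<integral>\<^sup>+x. \<integral>\<^sup>+y. ennreal (exp (- \<kappa> * (\<alpha> * y + \<beta> * x)\<^sup>2)) * indicator {x1..x1 + 2 * R} x
            * indicator {y1..y1 + 2 * R} y \<partial>lborel \<partial>lborel)
        = (\<integral>\<^sup>+y. \<integral>\<^sup>+x. ennreal (exp (- \<kappa> * (\<beta> * x + \<alpha> * y)\<^sup>2)) * indicator {y1..y1 + 2 * R} y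
            * indicator {x1..x1 + 2 * R} x \<partial>lborel \<partial>lborel)"
    by (subst lborel_pair.Fubini') (auto simp: add.commute mult_ac)
  also have "\<dots> \<le> ennreal (2 * R * sqrt 2) * (\<integral>\<^sup>+t. ennreal (exp (- \<kappa> * t\<^sup>2)) \<partial>lborel)"
    by (rule nn_integral_gaussian_strip_square_le_transversal[OF \<open>1/2 \<le> \<beta>\<^sup>2\<close> R])
  finally show ?thesis .
qed

section \<open>Iterates of the weighted composition operator\<close>

lemma power2_norm_add: "(norm (z + w))\<^sup>2 = (norm z)\<^sup>2 + (norm w)\<^sup>2 + 2 * Re (cnj z * w)"
  unfolding cmod_power2 by (simp add: power2_eq_square algebra_simps)

locale affine_wcomp =
  fixes v :: real and a b p q r :: complex
  assumes v: "1 \<le> v" and norm_a: "0 < norm a" "norm a < 1"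
    and norm_r: "0 < norm r" "norm r \<le> (1 - (norm a)\<^sup>2) / 2"
begin

definition "phi = (\<lambda>z. a * z + b)"
definition "w = (\<lambda>z. exp (p + q * z + r * z\<^sup>2))"
definition "T = wcomp w phi"
definition "z0 = b / (1 - a)"
definition "c = Re (p + q * z0 + r * z0\<^sup>2)"
definition "l = q + 2 * r * z0 + cnj z0 * (a - 1)"

lemma v_pos: "0 < v"
  using v by simp

lemma c_eq: "c = Re p + Re (q * b / (1 - a)) + Re (r * b\<^sup>2 / (1 - a)\<^sup>2)"
  by (simp add: c_def z0_def power_divide)

lemma phi_z0: "a * z0 + b = z0"
proof -
  have "a \<noteq> 1" using norm_a by auto
  then show ?thesis by (simp add: z0_def field_simps)
qed

lemma funpow_phi: "(phi ^^ k) z = z0 + a ^ k * (z - z0)"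
proof (induction k)
  case (Suc k)
  have "(phi ^^ Suc k) z = phi ((phi ^^ k) z)" by simp
  also have "\<dots> = a * (z0 + a ^ k * (z - z0)) + b" by (simp only: Suc) (simp add: phi_def)
  also have "\<dots> = (a * z0 + b) + a ^ Suc k * (z - z0)" by (simp add: algebra_simps)
  finally show ?case by (simp add: phi_z0)
qed simp

lemma T_apply: "T g = (\<lambda>z. w z * g (phi z))"
  by (simp add: T_def wcomp_def)

lemma funpow_T: "(T ^^ n) f = (\<lambda>z. (\<Prod>k<n. w ((phi ^^ k) z)) * f ((phi ^^ n) z))"
proof (induction n arbitrary: f)
  case (Suc n)
  have shift: "(phi ^^ k) (phi z) = (phi ^^ Suc k) z" for k z
    by (simp add: funpow_Suc_right del: funpow.simps)
  have "(T ^^ Suc n) f = T ((T ^^ n) f)" by simp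
  also have "\<dots> = (\<lambda>z. w z * ((\<Prod>k<n. w ((phi ^^ k) (phi z))) * f ((phi ^^ n) (phi z))))"
    by (simp add: T_apply Suc)
  also have "\<dots> = (\<lambda>z. (\<Prod>k<Suc n. w ((phi ^^ k) z)) * f ((phi ^^ Suc n) z))"
    unfolding shift prod.lessThan_Suc_shift by (simp add: mult.assoc)
  finally show ?case .
qed simp

lemma norm_w_mult_exp:
  "norm (w \<zeta>) * exp (((norm (phi \<zeta>))\<^sup>2 - (norm \<zeta>)\<^sup>2) / 2) = exp (c + log_gain a r l (\<zeta> - z0))"
proof -
  define u where "u = \<zeta> - z0"
  have z: "\<zeta> = z0 + u" by (simp add: u_def)
  have ph: "phi (z0 + u) = z0 + a * u" unfolding phi_def using phi_z0 by (simp add: algebra_simps)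
  have "norm (w \<zeta>) = exp (Re (p + q * \<zeta> + r * \<zeta>\<^sup>2))" by (simp add: w_def)
  moreover have "Re (p + q * \<zeta> + r * \<zeta>\<^sup>2) = c + Re ((q + 2 * r * z0) * u) + Re (r * u\<^sup>2)"
    unfolding z c_def by (simp add: power2_eq_square algebra_simps)
  moreover have "((norm (phi \<zeta>))\<^sup>2 - (norm \<zeta>)\<^sup>2) / 2 = Re (cnj z0 * (a - 1) * u) - (1 - (norm a)\<^sup>2) / 2 * (norm u)\<^sup>2"
    unfolding z ph power2_norm_add by (simp add: norm_mult power_mult_distrib field_simps)
  ultimately show ?thesis
    by (simp add: exp_add[symmetric] log_gain_def quad_form_def l_def u_def algebra_simps)
qed

lemma prod_norm_w_funpow:
  "(\<Prod>k<n. norm (w ((phi ^^ k) z))) * exp (((norm ((phi ^^ n) z))\<^sup>2 - (norm z)\<^sup>2) / 2)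
   = exp (n * c + (\<Sum>k<n. log_gain a r l (a ^ k * (z - z0))))"
proof (induction n)
  case (Suc n)
  define \<zeta> where "\<zeta> = (phi ^^ n) z"
  have "(\<Prod>k<Suc n. norm (w ((phi ^^ k) z))) * exp (((norm ((phi ^^ Suc n) z))\<^sup>2 - (norm z)\<^sup>2) / 2)
     = ((\<Prod>k<n. norm (w ((phi ^^ k) z))) * exp (((norm \<zeta>)\<^sup>2 - (norm z)\<^sup>2) / 2))
       * (norm (w \<zeta>) * exp (((norm (phi \<zeta>))\<^sup>2 - (norm \<zeta>)\<^sup>2) / 2))"
    by (simp add: \<zeta>_def mult_ac exp_add[symmetric] diff_divide_distrib)
  also have "\<dots> = exp (n * c + (\<Sum>k<n. log_gain a r l (a ^ k * (z - z0)))) * exp (c + log_gain a r l (a ^ n * (z - z0)))"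
    unfolding norm_w_mult_exp Suc[unfolded \<zeta>_def[symmetric]] by (simp add: \<zeta>_def funpow_phi)
  finally show ?case
    by (simp add: exp_add[symmetric] algebra_simps)
qed simp

lemma fock_density_funpow_T:
  "fock_density v ((T ^^ n) f) z
   = exp (v * (n * c + (\<Sum>k<n. log_gain a r l (a ^ k * (z - z0))))) * fock_density v f ((phi ^^ n) z)"
proof -
  define P where "P = (\<Prod>k<n. norm (w ((phi ^^ k) z)))"
  define S where "S = n * c + (\<Sum>k<n. log_gain a r l (a ^ k * (z - z0)))"
  have "P * exp (((norm ((phi ^^ n) z))\<^sup>2 - (norm z)\<^sup>2) / 2) = exp S"
    unfolding P_def S_def by (rule prod_norm_w_funpow)
  then have P: "P = exp (S - ((norm ((phi ^^ n) z))\<^sup>2 - (norm z)\<^sup>2) / 2)"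
    by (simp add: exp_diff eq_divide_eq)
  have "norm ((T ^^ n) f z) powr v = P powr v * norm (f ((phi ^^ n) z)) powr v"
    by (simp add: funpow_T P_def norm_mult prod_norm powr_mult prod_nonneg)
  also have "P powr v = exp (v * S) * exp (- v * (norm ((phi ^^ n) z))\<^sup>2 / 2) * exp (v * (norm z)\<^sup>2 / 2)"
    unfolding P powr_def by (simp add: exp_add[symmetric] algebra_simps diff_divide_distrib add_divide_distrib)
  finally show ?thesis unfolding S_def
    by (simp add: mult_ac exp_add[symmetric])
qed

lemma fock_density_funpow_T_one_ge:
  assumes "norm (z - z0) \<le> 1"
  shows "exp (v * (n * c)) * exp (- v * ((norm l + 1) / (1 - norm a))) * exp (- v * (norm z0 + 1)\<^sup>2 / 2)
     \<le> fock_density v ((T ^^ n) (\<lambda>_. 1)) z"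
proof -
  define D where "D = (norm l + 1) / (1 - norm a)"
  have orbit: "- D \<le> (\<Sum>k<n. log_gain a r l (a ^ k * (z - z0)))"
    using orbit_sum_log_gain_ge[OF norm_a(2) norm_r(2) assms] by (simp add: D_def minus_divide_left)
  have "v * (n * c) + - v * D \<le> v * (n * c + (\<Sum>k<n. log_gain a r l (a ^ k * (z - z0))))"
    using mult_left_mono[OF orbit, of v] v_pos by (simp add: algebra_simps)
  then have gain: "exp (v * (n * c)) * exp (- v * D)
      \<le> exp (v * (n * c + (\<Sum>k<n. log_gain a r l (a ^ k * (z - z0)))))"
    by (simp add: exp_add[symmetric])
  have "norm ((phi ^^ n) z) \<le> norm z0 + norm (a ^ n * (z - z0))"
    unfolding funpow_phi by (rule norm_triangle_ineq)
  also have "norm (a ^ n * (z - z0)) \<le> 1"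
    using assms norm_a by (simp add: norm_mult norm_power mult_le_one power_le_one)
  finally have "(norm ((phi ^^ n) z))\<^sup>2 \<le> (norm z0 + 1)\<^sup>2" by (intro power_mono) auto
  then have "exp (- v * (norm z0 + 1)\<^sup>2 / 2) \<le> exp (- v * (norm ((phi ^^ n) z))\<^sup>2 / 2)"
    using v_pos by simp
  with gain show ?thesis
    unfolding fock_density_funpow_T D_def[symmetric] by (simp add: mult_mono)
qed

lemma fock_integral_funpow_T_one_ge:
  obtains D where "D > 0" "\<And>n. ennreal (exp (v * (n * c)) * D) \<le> fock_integral v ((T ^^ n) (\<lambda>_. 1))"
proof
  define D where "D = exp (- v * ((norm l + 1) / (1 - norm a))) * exp (- v * (norm z0 + 1)\<^sup>2 / 2)"
  show "D > 0" by (simp add: D_def)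
  define S where "S = cbox (z0 - Complex (1/2) (1/2)) (z0 + Complex (1/2) (1/2))"
  have "emeasure lborel S = 1"
    unfolding S_def by (subst emeasure_lborel_cbox) (auto simp: Basis_complex_def)
  have near: "norm (z - z0) \<le> 1" if "z \<in> S" for z
  proof -
    have "Re z0 - 1/2 \<le> Re z" "Re z \<le> Re z0 + 1/2" "Im z0 - 1/2 \<le> Im z" "Im z \<le> Im z0 + 1/2"
      using that by (auto simp: S_def in_cbox_complex_iff)
    then have "\<bar>Re (z - z0)\<bar> \<le> 1/2" "\<bar>Im (z - z0)\<bar> \<le> 1/2"
      unfolding abs_le_iff by auto
    then show ?thesis using cmod_le[of "z - z0"] by linarith
  qed
  fix n :: nat
  have "ennreal (exp (v * (n * c)) * D) = (\<integral>\<^sup>+z. ennreal (exp (v * (n * c)) * D) * indicator S z \<partial>lborel)"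
    using \<open>emeasure lborel S = 1\<close> by (simp add: nn_integral_cmult_indicator S_def)
  also have "\<dots> \<le> fock_integral v ((T ^^ n) (\<lambda>_. 1))"
    unfolding fock_integral_def
    using fock_density_funpow_T_one_ge[OF near, of _ n]
    by (intro nn_integral_mono) (auto simp: indicator_def D_def mult.assoc intro!: ennreal_leI)
  finally show "ennreal (exp (v * (n * c)) * D) \<le> fock_integral v ((T ^^ n) (\<lambda>_. 1))" .
qed

lemma not_power_bounded:
  assumes bounded: "bounded_on_fock v T" and "c > 0"
  shows "\<not> power_bounded_on_fock v T"
proof
  assume "power_bounded_on_fock v T"
  then obtain C where C: "\<And>n f. n \<ge> 1 \<Longrightarrow> f \<in> fock_space v \<Longrightarrow> fock_norm v ((T ^^ n) f) \<le> C * fock_norm v f"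
    unfolding power_bounded_on_fock_def by blast
  obtain D where D: "D > 0" "\<And>n. ennreal (exp (v * (n * c)) * D) \<le> fock_integral v ((T ^^ n) (\<lambda>_. 1))"
    using fock_integral_funpow_T_one_ge by blast
  have one: "(\<lambda>_. 1) \<in> fock_space v" by (rule one_in_fock_space[OF v_pos])
  define N where "N = fock_norm v (\<lambda>_. 1)"
  define \<kappa> where "\<kappa> = (v * D / (2 * pi)) powr (1 / v)"
  have \<kappa>: "\<kappa> > 0" using D v_pos by (simp add: \<kappa>_def)
  have bound: "exp (n * c) * \<kappa> \<le> C * N" if n: "n \<ge> 1" for n :: nat
  proof -
    have "(v / (2 * pi) * (exp (v * (n * c)) * D)) powr (1 / v) \<le> fock_norm v ((T ^^ n) (\<lambda>_. 1))"
      using D v_pos fock_integral_finite[OF funpow_in_fock_space[OF bounded one]]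
      by (intro fock_norm_ge_of_le_fock_integral) auto
    also have "\<dots> \<le> C * N" unfolding N_def by (rule C[OF n one])
    also have "(v / (2 * pi) * (exp (v * (n * c)) * D)) powr (1 / v) = exp (v * (n * c)) powr (1 / v) * \<kappa>"
      unfolding \<kappa>_def using D v_pos by (simp add: powr_mult[symmetric] mult_ac)
    also have "exp (v * (n * c)) powr (1 / v) = exp (n * c)"
      using v_pos by (simp add: powr_def)
    finally show ?thesis .
  qed
  obtain m :: nat where "real m > C * N / (\<kappa> * c)"
    using reals_Archimedean2 by blast
  then obtain n :: nat where n: "n \<ge> 1" "real n > C * N / (\<kappa> * c)"
    by (intro that[of "m + 1"]) auto
  have "C * N < n * c * \<kappa>" using n(2) \<kappa> \<open>c > 0\<close> by (simp add: field_simps)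
  also have "n * c * \<kappa> \<le> exp (n * c) * \<kappa>"
    using \<kappa> by (intro mult_right_mono) (auto intro: order_trans[OF _ exp_ge_add_one_self] simp: add.commute)
  also have "\<dots> \<le> C * N" using bound[OF n(1)] .
  finally show False by simp
qed

lemma fock_density_T_exp_cnj_mult:
  "fock_density v (T (\<lambda>z. exp (cnj (phi \<zeta>) * z))) \<zeta>
     = exp (v * (c + log_gain a r l (\<zeta> - z0))) * exp (v * (norm (phi \<zeta>))\<^sup>2 / 2)"
proof -
  define A where "A = norm (w \<zeta>) * exp (((norm (phi \<zeta>))\<^sup>2 - (norm \<zeta>)\<^sup>2) / 2)"
  define B where "B = exp (((norm (phi \<zeta>))\<^sup>2 + (norm \<zeta>)\<^sup>2) / 2)"
  have "cnj (phi \<zeta>) * phi \<zeta> = complex_of_real ((norm (phi \<zeta>))\<^sup>2)"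
    by (metis complex_norm_square mult.commute)
  then have "norm (T (\<lambda>z. exp (cnj (phi \<zeta>) * z)) \<zeta>) = norm (w \<zeta>) * exp ((norm (phi \<zeta>))\<^sup>2)"
    by (simp add: T_def wcomp_def norm_mult)
  also have "\<dots> = A * B"
  proof -
    have "((norm (phi \<zeta>))\<^sup>2 - (norm \<zeta>)\<^sup>2) / 2 + ((norm (phi \<zeta>))\<^sup>2 + (norm \<zeta>)\<^sup>2) / 2 = (norm (phi \<zeta>))\<^sup>2"
      by (simp add: field_simps)
    then show ?thesis unfolding A_def B_def by (simp only: mult.assoc mult_exp_exp)
  qed
  finally have "fock_density v (T (\<lambda>z. exp (cnj (phi \<zeta>) * z))) \<zeta>
      = A powr v * (B powr v * exp (- v * (norm \<zeta>)\<^sup>2 / 2))"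
    by (simp add: powr_mult A_def B_def mult.assoc)
  also have "B powr v * exp (- v * (norm \<zeta>)\<^sup>2 / 2) = exp (v * (norm (phi \<zeta>))\<^sup>2 / 2)"
  proof -
    have "B powr v = exp (v * (((norm (phi \<zeta>))\<^sup>2 + (norm \<zeta>)\<^sup>2) / 2))"
      unfolding B_def by (simp add: powr_def)
    moreover have "v * (((norm (phi \<zeta>))\<^sup>2 + (norm \<zeta>)\<^sup>2) / 2) + - v * (norm \<zeta>)\<^sup>2 / 2 = v * (norm (phi \<zeta>))\<^sup>2 / 2"
      by (simp add: field_simps)
    ultimately show ?thesis by (simp only: mult_exp_exp)
  qed
  also have "A powr v = exp (v * (c + log_gain a r l (\<zeta> - z0)))"
    unfolding A_def norm_w_mult_exp by (simp add: powr_def)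
  finally show ?thesis .
qed

lemma log_gain_bounded:
  assumes "bounded_on_fock v T"
  obtains M where "\<And>u. log_gain a r l u \<le> M"
proof -
  obtain C where C: "\<And>f. f \<in> fock_space v \<Longrightarrow> fock_norm v (T f) \<le> C * fock_norm v f"
    and maps: "\<And>f. f \<in> fock_space v \<Longrightarrow> T f \<in> fock_space v"
    using assms unfolding bounded_on_fock_def by blast
  define I where "I = enn2real (fock_integral v (\<lambda>_. 1))"
  define K where "K = fock_local_const v * \<bar>C\<bar> powr v * I"
  \<comment> \<open>test the boundedness of T on the kernel at phi \<zeta>\<close>
  have kernel: "exp (v * (c + log_gain a r l (\<zeta> - z0))) \<le> K" for \<zeta>
  proof -
    define k where "k = (\<lambda>z. exp (cnj (phi \<zeta>) * z))"
    define e where "e = exp (v * (norm (phi \<zeta>))\<^sup>2 / 2)"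
    have k: "k \<in> fock_space v" unfolding k_def by (rule exp_cnj_mult_in_fock_space[OF v_pos])
    have "exp (v * (c + log_gain a r l (\<zeta> - z0))) * e = fock_density v (T k) \<zeta>"
      unfolding k_def e_def fock_density_T_exp_cnj_mult ..
    also have "\<dots> \<le> fock_local_const v * enn2real (fock_integral v (T k))"
      by (rule fock_density_le_enn2real_fock_integral[OF maps[OF k] v])
    also have "\<dots> \<le> fock_local_const v * (\<bar>C\<bar> powr v * enn2real (fock_integral v k))"
      using enn2real_fock_integral_le_of_fock_norm_le[OF v_pos k maps[OF k] C[OF k]]
      by (intro mult_left_mono) (auto simp: fock_local_const_pos less_imp_le)
    also have "enn2real (fock_integral v k) = e * I"
      unfolding k_def e_def I_def fock_integral_exp_cnj_mult by (simp add: enn2real_mult)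
    finally have "exp (v * (c + log_gain a r l (\<zeta> - z0))) * e \<le> K * e"
      by (simp add: K_def mult_ac)
    then show ?thesis by (simp add: e_def)
  qed
  have "K > 0" using kernel[of 0] exp_gt_zero[of "v * (c + log_gain a r l (0 - z0))"] by linarith
  have "log_gain a r l u \<le> ln K / v - c" for u
  proof -
    have "v * (c + log_gain a r l u) \<le> ln K"
      using kernel[of "u + z0"] \<open>K > 0\<close> by (simp add: ln_ge_iff)
    then show ?thesis using v_pos by (simp add: field_simps)
  qed
  then show ?thesis using that by blast
qed

lemma nn_integral_gaussian_strip_preimage_le:
  assumes "norm \<sigma> = 1"
  shows "(\<integral>\<^sup>+z. ennreal (exp (- \<kappa> * (Im (\<sigma> * (z - z0)))\<^sup>2)) * indicator (centred_square 2) (\<xi> - (phi ^^ n) z) \<partial>lborel)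
     \<le> ennreal (6 * sqrt 2 / norm a ^ n) * (\<integral>\<^sup>+t. ennreal (exp (- \<kappa> * t\<^sup>2)) \<partial>lborel)"
proof -
  define R where "R = 3 / norm a ^ n"
  define d where "d = (\<xi> - z0) / a ^ n"
  have "a ^ n \<noteq> 0" using norm_a by auto
  define I1 where "I1 = {Re d - R..Re d - R + 2 * R}"
  define I2 where "I2 = {Im d - R..Im d - R + 2 * R}"
  \<comment> \<open>the preimage of the square under phi ^^ n lies in a square of side 2 R around z0 + d\<close>
  have ind: "indicator (centred_square 2) (\<xi> - (phi ^^ n) z) \<le> (indicator I1 (Re (z - z0)) * indicator I2 (Im (z - z0)) :: ennreal)" for z
  proof (cases "\<xi> - (phi ^^ n) z \<in> centred_square 2")
    case True
    have "(Re (\<xi> - (phi ^^ n) z))\<^sup>2 \<le> 4" "(Im (\<xi> - (phi ^^ n) z))\<^sup>2 \<le> 4"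
      using True by (auto simp: in_cbox_complex_iff abs_le_iff
          intro!: power2_le_iff_abs_le[THEN iffD2, of 2, simplified])
    then have "(norm (\<xi> - (phi ^^ n) z))\<^sup>2 \<le> 3\<^sup>2" by (simp add: cmod_power2)
    then have three: "norm (\<xi> - (phi ^^ n) z) \<le> 3" by (rule power2_le_imp_le) simp
    have "\<xi> - (phi ^^ n) z = a ^ n * (d - (z - z0))"
      unfolding funpow_phi d_def using \<open>a ^ n \<noteq> 0\<close> by (simp add: field_simps)
    then have "norm a ^ n * norm (d - (z - z0)) \<le> 3" using three by (simp add: norm_mult norm_power)
    then have "norm (d - (z - z0)) \<le> R"
      unfolding R_def using norm_a by (simp add: field_simps mult.commute)
    then have "\<bar>Re (d - (z - z0))\<bar> \<le> R" "\<bar>Im (d - (z - z0))\<bar> \<le> R"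
      using abs_Re_le_cmod[of "d - (z - z0)"] abs_Im_le_cmod[of "d - (z - z0)"] by linarith+
    then show ?thesis unfolding I1_def I2_def abs_le_iff by (auto simp: indicator_def)
  qed simp
  define f where "f = (\<lambda>u. ennreal (exp (- \<kappa> * (Im (\<sigma> * u))\<^sup>2)) * indicator I1 (Re u) * indicator I2 (Im u))"
  have f_measurable[measurable]: "f \<in> borel_measurable borel" unfolding f_def I1_def I2_def by measurable
  have "(\<integral>\<^sup>+z. ennreal (exp (- \<kappa> * (Im (\<sigma> * (z - z0)))\<^sup>2)) * indicator (centred_square 2) (\<xi> - (phi ^^ n) z) \<partial>lborel)
     \<le> (\<integral>\<^sup>+z. f (z + - z0) \<partial>lborel)"
    unfolding f_def using ind by (intro nn_integral_mono) (simp add: mult.assoc mult_left_mono)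
  also have "\<dots> = (\<integral>\<^sup>+u. f u \<partial>lborel)" by (rule nn_integral_lborel_translate) measurable
  also have "\<dots> = (\<integral>\<^sup>+x. \<integral>\<^sup>+y. ennreal (exp (- \<kappa> * (Re \<sigma> * y + Im \<sigma> * x)\<^sup>2)) * indicator I1 x * indicator I2 y \<partial>lborel \<partial>lborel)"
    unfolding nn_integral_lborel_complex[OF f_measurable] by (simp add: f_def algebra_simps)
  also have "\<dots> \<le> ennreal (2 * R * sqrt 2) * (\<integral>\<^sup>+t. ennreal (exp (- \<kappa> * t\<^sup>2)) \<partial>lborel)"
    unfolding I1_def I2_def using assms
    by (intro nn_integral_gaussian_strip_square_le) (simp_all add: R_def cmod_power2[symmetric])
  also have "2 * R * sqrt 2 = 6 * sqrt 2 / norm a ^ n" by (simp add: R_def)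
  finally show ?thesis .
qed

lemma fock_density_funpow_T_le:
  assumes orbit: "\<And>n u. (\<Sum>k<n. log_gain a r l (a ^ k * u)) \<le> B"
    and strip: "\<And>u. log_gain a r l u \<le> 2 * M - norm r * (Im (\<sigma> * u))\<^sup>2" and "n \<ge> 1"
  shows "fock_density v ((T ^^ n) f) z \<le> exp (v * (n * c)) * exp (v * (2 * M + B))
           * exp (- (v * norm r) * (Im (\<sigma> * (z - z0)))\<^sup>2) * fock_density v f ((phi ^^ n) z)"
proof -
  define u where "u = z - z0"
  obtain m where m: "n = Suc m" using \<open>n \<ge> 1\<close> by (cases n) auto
  \<comment> \<open>the first term of the orbit sum decays across the strip, the others are bounded by B\<close>
  have "(\<Sum>k<n. log_gain a r l (a ^ k * u)) = log_gain a r l u + (\<Sum>k<m. log_gain a r l (a ^ k * (a * u)))"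
    unfolding m sum.lessThan_Suc_shift by (simp add: mult_ac)
  also have "\<dots> \<le> 2 * M - norm r * (Im (\<sigma> * u))\<^sup>2 + B"
    using strip[of u] orbit[where n=m and u="a * u"] by linarith
  finally have "v * (\<Sum>k<n. log_gain a r l (a ^ k * u)) \<le> v * (2 * M - norm r * (Im (\<sigma> * u))\<^sup>2 + B)"
    using v_pos by (simp add: mult_left_mono)
  then have "v * (n * c + (\<Sum>k<n. log_gain a r l (a ^ k * u)))
      \<le> v * (n * c) + v * (2 * M + B) + - (v * norm r) * (Im (\<sigma> * u))\<^sup>2"
    by (simp add: algebra_simps)
  then show ?thesis
    unfolding fock_density_funpow_T u_def[symmetric]
    by (intro mult_right_mono) (auto simp: exp_add[symmetric])
qed

lemma fock_integral_funpow_T_le: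
  assumes orbit: "\<And>n u. (\<Sum>k<n. log_gain a r l (a ^ k * u)) \<le> B"
    and strip: "\<And>u. log_gain a r l u \<le> 2 * M - norm r * (Im (\<sigma> * u))\<^sup>2" and \<sigma>: "norm \<sigma> = 1"
    and f: "f \<in> fock_space v" and n: "n \<ge> 1"
  defines "G \<equiv> \<integral>\<^sup>+t. ennreal (exp (- (v * norm r) * t\<^sup>2)) \<partial>lborel"
  shows "fock_integral v ((T ^^ n) f) \<le>
     ennreal (exp (v * (n * c)) * exp (v * (2 * M + B)) * fock_local_const v * (6 * sqrt 2 / norm a ^ n))
       * G * fock_integral v f"
proof -
  define Q where "Q = exp (v * (n * c)) * exp (v * (2 * M + B)) * fock_local_const v"
  have Q: "Q > 0" by (simp add: Q_def fock_local_const_pos)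
  define E where "E = (\<lambda>z. exp (- (v * norm r) * (Im (\<sigma> * (z - z0)))\<^sup>2))"
  define F where "F = (\<lambda>\<xi>. ennreal (fock_density v f \<xi>))"
  define P where "P = (\<lambda>z. z0 + a ^ n * (z - z0))"
  have P: "(phi ^^ n) z = P z" for z by (simp add: funpow_phi P_def)
  have fh: "f holomorphic_on UNIV" using f by (simp add: fock_space_def)
  have [measurable]: "f \<in> borel_measurable borel"
    using fh holomorphic_on_imp_continuous_on borel_measurable_continuous_onI by blast
  have [measurable]: "F \<in> borel_measurable borel" "E \<in> borel_measurable borel" "P \<in> borel_measurable borel"
    unfolding F_def E_def P_def by measurable
  have "fock_integral v ((T ^^ n) f)
      \<le> (\<integral>\<^sup>+z. ennreal Q * (ennreal (E z) * (\<integral>\<^sup>+\<xi>. F \<xi> * indicator (centred_square 2) (\<xi> - P z) \<partial>lborel)) \<partial>lborel)"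
    unfolding fock_integral_def
  proof (rule nn_integral_mono)
    fix z
    have "ennreal (fock_density v ((T ^^ n) f) z)
        \<le> ennreal (exp (v * (n * c)) * exp (v * (2 * M + B)) * E z) * F (P z)"
      using fock_density_funpow_T_le[OF orbit strip n, of f z]
      by (simp add: E_def F_def P ennreal_mult[symmetric] ennreal_leI)
    also have "\<dots> \<le> ennreal (exp (v * (n * c)) * exp (v * (2 * M + B)) * E z)
        * (ennreal (fock_local_const v) * (\<integral>\<^sup>+\<xi>. F \<xi> * indicator (centred_square 2) (\<xi> - P z) \<partial>lborel))"
      unfolding F_def by (intro mult_left_mono fock_density_le_nn_integral_square fh v) auto
    also have "\<dots> = ennreal Q * (ennreal (E z) * (\<integral>\<^sup>+\<xi>. F \<xi> * indicator (centred_square 2) (\<xi> - P z) \<partial>lborel))"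
      by (simp add: Q_def E_def ennreal_mult fock_local_const_pos less_imp_le mult_ac)
    finally show "ennreal (fock_density v ((T ^^ n) f) z) \<le> \<dots>" .
  qed
  also have "\<dots> = ennreal Q * (\<integral>\<^sup>+z. ennreal (E z) * (\<integral>\<^sup>+\<xi>. F \<xi> * indicator (centred_square 2) (\<xi> - P z) \<partial>lborel) \<partial>lborel)"
    by (rule nn_integral_cmult) measurable
  also have "\<dots> \<le> ennreal Q * ((ennreal (6 * sqrt 2 / norm a ^ n) * G) * (\<integral>\<^sup>+\<xi>. F \<xi> \<partial>lborel))"
    using nn_integral_gaussian_strip_preimage_le[OF \<sigma>, where \<kappa>="v * norm r" and n=n]
    by (intro mult_left_mono nn_integral_kernel_le) (auto simp: E_def G_def P)
  also have "\<dots> = (ennreal Q * ennreal (6 * sqrt 2 / norm a ^ n)) * G * fock_integral v f"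
    unfolding F_def fock_integral_def by (simp only: mult_ac)
  also have "ennreal Q * ennreal (6 * sqrt 2 / norm a ^ n) = ennreal (Q * (6 * sqrt 2 / norm a ^ n))"
    using Q by (intro ennreal_mult[symmetric]) auto
  finally show ?thesis unfolding Q_def .
qed

lemma power_bounded:
  assumes bounded: "bounded_on_fock v T" and "c - ln (norm a) < 0"
  shows "power_bounded_on_fock v T"
proof -
  obtain M where M: "\<And>u. log_gain a r l u \<le> M"
    using log_gain_bounded[OF bounded] by blast
  interpret bounded_log_gain a r l M
    using norm_a norm_r M by unfold_locales
  obtain B where B: "\<And>n u. (\<Sum>k<n. log_gain a r l (a ^ k * u)) \<le> B"
    using orbit_sums_bounded by blast
  obtain \<sigma> where \<sigma>: "norm \<sigma> = 1" and strip: "\<And>u. log_gain a r l u \<le> 2 * M - norm r * (Im (\<sigma> * u))\<^sup>2"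
    using log_gain_le_strip by blast
  define G where "G = (\<integral>\<^sup>+t. ennreal (exp (- (v * norm r) * t\<^sup>2)) \<partial>lborel)"
  obtain G' where G': "G = ennreal G'" "0 \<le> G'"
    using nn_integral_gaussian_finite[of "v * norm r"] v_pos norm_r unfolding G_def
    by (cases G) (auto simp: G_def)
  define \<rho> where "\<rho> = exp (v * c) / norm a"
  have "c < 0" using assms(2) norm_a ln_less_zero[of "norm a"] by linarith
  then have "v * c \<le> c" using v by (simp add: mult_le_cancel_right1)
  then have "v * c < ln (norm a)" using assms(2) by linarith
  then have "exp (v * c) < norm a" using norm_a by (metis exp_less_cancel_iff exp_ln)
  then have \<rho>: "0 \<le> \<rho>" "\<rho> \<le> 1" using norm_a by (auto simp: \<rho>_def)
  define K where "K = exp (v * (2 * M + B)) * fock_local_const v * (6 * sqrt 2) * G'"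
  have K: "0 \<le> K" using G' by (simp add: K_def fock_local_const_pos less_imp_le)
  have "fock_integral v ((T ^^ n) f) \<le> ennreal K * fock_integral v f"
    if f: "f \<in> fock_space v" and n: "n \<ge> 1" for n f
  proof -
    have "exp (v * (n * c)) * exp (v * (2 * M + B)) * fock_local_const v * (6 * sqrt 2 / norm a ^ n) * G'
        = K * \<rho> ^ n"
      by (simp add: K_def \<rho>_def power_divide exp_of_nat_mult[symmetric] mult_ac)
    also have "\<dots> \<le> K" using K \<rho> by (intro mult_left_le power_le_one) auto
    finally have "ennreal (exp (v * (n * c)) * exp (v * (2 * M + B)) * fock_local_const v * (6 * sqrt 2 / norm a ^ n))
        * G \<le> ennreal K"
      using G' by (simp add: ennreal_mult[symmetric] fock_local_const_pos less_imp_le ennreal_leI)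
    then show ?thesis
      using fock_integral_funpow_T_le[OF B strip \<sigma> f n] unfolding G_def[symmetric]
      by (meson mult_right_mono order_trans zero_le)
  qed
  then show ?thesis
    unfolding power_bounded_on_fock_def
    using fock_norm_le_of_fock_integral_le[OF v_pos _ K] by blast
qed

end

theorem theorem3p4:
  fixes \<nu> :: real and a b p q r :: complex
  assumes "1 \<le> \<nu>"
    and "0 < norm a" and "norm a < 1"
    and "0 < norm r" and "norm r \<le> (1 - (norm a)\<^sup>2) / 2"
    and "bounded_on_fock \<nu> (wcomp (\<lambda>z. exp (p + q * z + r * z\<^sup>2)) (\<lambda>z. a * z + b))"
  shows "(Re p + Re (q * b / (1 - a)) + Re (r * b\<^sup>2 / (1 - a)\<^sup>2) > 0 \<longrightarrow>
           \<not> power_bounded_on_fock \<nu> (wcomp (\<lambda>z. exp (p + q * z + r * z\<^sup>2)) (\<lambda>z. a * z + b))) \<and>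
         (Re p + Re (q * b / (1 - a)) + Re (r * b\<^sup>2 / (1 - a)\<^sup>2) - ln (norm a) < 0 \<longrightarrow>
           power_bounded_on_fock \<nu> (wcomp (\<lambda>z. exp (p + q * z + r * z\<^sup>2)) (\<lambda>z. a * z + b)))"
proof -
  interpret affine_wcomp \<nu> a b p q r
    using assms(1-5) by unfold_locales
  have "T = wcomp (\<lambda>z. exp (p + q * z + r * z\<^sup>2)) (\<lambda>z. a * z + b)"
    by (simp add: T_def w_def phi_def)
  then show ?thesis
    using not_power_bounded power_bounded assms(6) unfolding c_eq by auto
qed

end
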